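(* The functor $\iota\colon \mathcal{D}iag \to \mathcal{D}iag^S$ induced by the inclusion of generators $\mathcal{D}_0 \hookrightarrow \mathcal{D}^S_0$ is an isomorphism of categories.
   Context: Monoidal categories are strict. In a braided monoidal category with braiding $\tau$, a coalgebra is an object $C$ with $\Delta\colon C\to C\otimes C$, $\varepsilon\colon C\to\mathbf 1$ satisfying $(\mathrm{id}\otimes\Delta)\Delta=(\Delta\otimes\mathrm{id})\Delta$ and $(\varepsilon\otimes\mathrm{id})\Delta=\mathrm{id}=(\mathrm{id}\otimes\varepsilon)\Delta$; if $C,C'$ are coalgebras, $C\otimes C'$ is a coalgebra with counit $\varepsilon\otimes\varepsilon'$ and coproduct $(\mathrm{id}_C\otimes\tau_{C,C'}\otimes\mathrm{id}_{C'})(\Delta\otimes\Delta')$; hence $C^{\otimes n}$ is a coalgebra for all $n\ge 0$. For a coalgebra $C$ in a braided category $\mathcal{C}$, the convolution category $\mathrm{Conv}_{\mathcal C}(C,\mathbf 1)$ has objects the non-negative integers, no morphisms $m\to n$ for $m\ne n$, and $\mathrm{End}(n)=\mathrm{Hom}_{\mathcal C}(C^{\otimes n},\mathbf 1)$ with composition $f\circ g=(f\otimes g)\Delta_{C^{\otimes n}}$ and identity $\varepsilon^{\otimes n}$. Let $\mathcal{D}_0$ be the braided strict monoidal category freely generated by one object $*$ and morphisms $\Delta\colon *\to *\otimes *$, $\varepsilon\colon *\to\mathbf 1$, $\omega_+,\omega_-\colon *\otimes*\to\mathbf 1$, $\theta_+,\theta_-\colon *\to\mathbf 1$; let $\mathcal{D}$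 be its quotient by the relations $(\mathrm{id}_*\otimes\Delta)\Delta=(\Delta\otimes\mathrm{id}_* )\Delta$ and $(\mathrm{id}_*\otimes\varepsilon)\Delta=\mathrm{id}_*=(\varepsilon\otimes\mathrm{id}_* )\Delta$ (i.e. by the smallest congruence compatible with composition and tensor product containing them). Let $\mathcal{D}^S_0$ be the braided strict monoidal category freely generated by $*$ and the same morphisms together with two further morphisms $S, S^{-1}\colon *\to *$ (formal generators), and let $\mathcal{D}^S$ be its quotient by the two relations above together with: $SS^{-1}=\mathrm{id}_*=S^{-1}S$; $\Delta S=(S\otimes S)\tau_{*,*}\Delta$; $\varepsilon S=\varepsilon$; $\theta_\pm S=\theta_\pm$; $\omega_+(S\otimes\mathrm{id}_* )=\omega_-=\omega_+(\mathrm{id}_*\otimes S)$; $\omega_+(S^{-1}\otimes\mathrm{id}_* )=\omega_-\tau_{*,*}=\omega_+(\mathrm{id}_*\otimes S^{-1})$, where $\tau_{*,*}$ is the braiding of $*$ with itself. In $\mathcal D$ and $\mathcal D^S$, $( *,\Delta,\varepsilon)$ is a coalgebra. Define $\mathcal{D}iag=\mathrm{Conv}_{\mathcal D}( *,\mathbf 1)$ and $\mathcal{D}iag^S=\mathrm{Conv}_{\mathcal D^S}( *,\mathbf 1)$. The inclusion $\mathcal D_0\hookrightarrow\mathcal D^S_0$ induces a functor $\mathcal D\to\mathcal D^S$ and hence a functor $\iota\colon\mathcal{D}iag\to\mathcal{D}iag^S$ which is the identity on objects. *)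

theory Defs
  imports Main
begin

text \<open>Objects of a braided strict monoidal category freely generated by one object * are
  the tensor powers of *, identified with natural numbers (tensor = addition).
  Comp f g means f after g.\<close>

datatype 'g tm =
    Gen 'g
  | Id nat
  | Comp "'g tm" "'g tm"
  | Tens "'g tm" "'g tm"
  | Br nat nat
  | BrInv nat nat

fun tmty :: "('g \<Rightarrow> nat \<times> nat) \<Rightarrow> 'g tm \<Rightarrow> (nat \<times> nat) option" where
  "tmty ty (Gen g) = Some (ty g)"
| "tmty ty (Id n) = Some (n, n)"
| "tmty ty (Comp f g) =
     (case (tmty ty f, tmty ty g) of
        (Some (a, b), Some (c, d)) \<Rightarrow> (if d = a then Some (c, b) else None)
      | _ \<Rightarrow> None)"
| "tmty ty (Tens f g) =
     (case (tmty ty f, tmty ty g) of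
        (Some (a, b), Some (c, d)) \<Rightarrow> Some (a + c, b + d)
      | _ \<Rightarrow> None)"
| "tmty ty (Br m n) = Some (m + n, n + m)"
| "tmty ty (BrInv m n) = Some (n + m, m + n)"

inductive beq :: "('g \<Rightarrow> nat \<times> nat) \<Rightarrow> ('g tm \<times> 'g tm) set \<Rightarrow> 'g tm \<Rightarrow> 'g tm \<Rightarrow> bool"
  for ty R where
  refl: "beq ty R t t"
| sym: "beq ty R s t \<Longrightarrow> beq ty R t s"
| trans: "beq ty R s t \<Longrightarrow> beq ty R t u \<Longrightarrow> beq ty R s u"
| comp_cong: "beq ty R s s' \<Longrightarrow> beq ty R t t' \<Longrightarrow> beq ty R (Comp s t) (Comp s' t')"
| tens_cong: "beq ty R s s' \<Longrightarrow> beq ty R t t' \<Longrightarrow> beq ty R (Tens s t) (Tens s' t')"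
| rel: "(s, t) \<in> R \<Longrightarrow> beq ty R s t"
| id_l: "tmty ty f = Some (n, m) \<Longrightarrow> beq ty R (Comp (Id m) f) f"
| id_r: "tmty ty f = Some (n, m) \<Longrightarrow> beq ty R (Comp f (Id n)) f"
| assoc: "tmty ty f = Some (c, d) \<Longrightarrow> tmty ty g = Some (b, c) \<Longrightarrow> tmty ty h = Some (a, b) \<Longrightarrow>
          beq ty R (Comp (Comp f g) h) (Comp f (Comp g h))"
| tens_assoc: "beq ty R (Tens (Tens f g) h) (Tens f (Tens g h))"
| tens_unit_l: "beq ty R (Tens (Id 0) f) f"
| tens_unit_r: "beq ty R (Tens f (Id 0)) f"
| tens_id: "beq ty R (Tens (Id m) (Id n)) (Id (m + n))"
| interchange: "tmty ty f = Some (b, c) \<Longrightarrow> tmty ty f' = Some (a, b) \<Longrightarrow>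
                tmty ty g = Some (e, k) \<Longrightarrow> tmty ty g' = Some (d, e) \<Longrightarrow>
                beq ty R (Comp (Tens f g) (Tens f' g')) (Tens (Comp f f') (Comp g g'))"
| br_inv1: "beq ty R (Comp (Br m n) (BrInv m n)) (Id (n + m))"
| br_inv2: "beq ty R (Comp (BrInv m n) (Br m n)) (Id (m + n))"
| br_nat: "tmty ty f = Some (m, m') \<Longrightarrow> tmty ty g = Some (n, n') \<Longrightarrow>
           beq ty R (Comp (Br m' n') (Tens f g)) (Comp (Tens g f) (Br m n))"
| hex1: "beq ty R (Br (l + m) n) (Comp (Tens (Br l n) (Id m)) (Tens (Id l) (Br m n)))"
| hex2: "beq ty R (Br l (m + n)) (Comp (Tens (Id m) (Br l n)) (Tens (Br l m) (Id n)))"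

definition Hom :: "('g \<Rightarrow> nat \<times> nat) \<Rightarrow> ('g tm \<times> 'g tm) set \<Rightarrow> nat \<Rightarrow> nat \<Rightarrow> 'g tm set set" where
  "Hom ty R n m = {t. tmty ty t = Some (n, m)} // {(s, t). beq ty R s t}"

text \<open>Coproduct of *^n, built as the tensor coalgebra *^n = *^(n-1) \<otimes> *, and counit eps^n.\<close>
fun dpow :: "'g \<Rightarrow> nat \<Rightarrow> 'g tm" where
  "dpow d 0 = Id 0"
| "dpow d (Suc n) = Comp (Tens (Tens (Id n) (Br n 1)) (Id 1)) (Tens (dpow d n) (Gen d))"

fun epow :: "'g \<Rightarrow> nat \<Rightarrow> 'g tm" where
  "epow e 0 = Id 0"
| "epow e (Suc n) = Tens (epow e n) (Gen e)"

definition conv_comp :: "('g \<Rightarrow> nat \<times> nat) \<Rightarrow> ('g tm \<times> 'g tm) set \<Rightarrow> 'g \<Rightarrow> nat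
    \<Rightarrow> 'g tm set \<Rightarrow> 'g tm set \<Rightarrow> 'g tm set" where
  "conv_comp ty R d n X Y = {t. \<exists>f\<in>X. \<exists>g\<in>Y. beq ty R (Comp (Tens f g) (dpow d n)) t}"

definition conv_id :: "('g \<Rightarrow> nat \<times> nat) \<Rightarrow> ('g tm \<times> 'g tm) set \<Rightarrow> 'g \<Rightarrow> nat \<Rightarrow> 'g tm set" where
  "conv_id ty R e n = {t. beq ty R (epow e n) t}"

datatype gen0 = G_Delta | G_Eps | G_OmP | G_OmM | G_ThP | G_ThM

fun ty0 :: "gen0 \<Rightarrow> nat \<times> nat" where
  "ty0 G_Delta = (1, 2)"
| "ty0 G_Eps = (1, 0)"
| "ty0 G_OmP = (2, 0)"
| "ty0 G_OmM = (2, 0)"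
| "ty0 G_ThP = (1, 0)"
| "ty0 G_ThM = (1, 0)"

datatype genS = G0 gen0 | G_S | G_Sinv

fun tyS :: "genS \<Rightarrow> nat \<times> nat" where
  "tyS (G0 g) = ty0 g"
| "tyS G_S = (1, 1)"
| "tyS G_Sinv = (1, 1)"

definition coalg_rels :: "'g \<Rightarrow> 'g \<Rightarrow> ('g tm \<times> 'g tm) set" where
  "coalg_rels d e =
    { (Comp (Tens (Id 1) (Gen d)) (Gen d), Comp (Tens (Gen d) (Id 1)) (Gen d)),
      (Comp (Tens (Id 1) (Gen e)) (Gen d), Id 1),
      (Comp (Tens (Gen e) (Id 1)) (Gen d), Id 1) }"

definition R_D :: "(gen0 tm \<times> gen0 tm) set" where
  "R_D = coalg_rels G_Delta G_Eps"

definition R_DS :: "(genS tm \<times> genS tm) set" where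
  "R_DS = coalg_rels (G0 G_Delta) (G0 G_Eps) \<union>
    { (Comp (Gen G_S) (Gen G_Sinv), Id 1),
      (Comp (Gen G_Sinv) (Gen G_S), Id 1),
      (Comp (Gen (G0 G_Delta)) (Gen G_S),
         Comp (Tens (Gen G_S) (Gen G_S)) (Comp (Br 1 1) (Gen (G0 G_Delta)))),
      (Comp (Gen (G0 G_Eps)) (Gen G_S), Gen (G0 G_Eps)),
      (Comp (Gen (G0 G_ThP)) (Gen G_S), Gen (G0 G_ThP)),
      (Comp (Gen (G0 G_ThM)) (Gen G_S), Gen (G0 G_ThM)),
      (Comp (Gen (G0 G_OmP)) (Tens (Gen G_S) (Id 1)), Gen (G0 G_OmM)),
      (Comp (Gen (G0 G_OmP)) (Tens (Id 1) (Gen G_S)), Gen (G0 G_OmM)),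
      (Comp (Gen (G0 G_OmP)) (Tens (Gen G_Sinv) (Id 1)), Comp (Gen (G0 G_OmM)) (Br 1 1)),
      (Comp (Gen (G0 G_OmP)) (Tens (Id 1) (Gen G_Sinv)), Comp (Gen (G0 G_OmM)) (Br 1 1)) }"

definition EndD :: "nat \<Rightarrow> gen0 tm set set" where "EndD n = Hom ty0 R_D n 0"
definition EndDS :: "nat \<Rightarrow> genS tm set set" where "EndDS n = Hom tyS R_DS n 0"
definition compD where "compD n = conv_comp ty0 R_D G_Delta n"
definition compDS where "compDS n = conv_comp tyS R_DS (G0 G_Delta) n"
definition idD where "idD n = conv_id ty0 R_D G_Eps n"
definition idDS where "idDS n = conv_id tyS R_DS (G0 G_Eps) n"

definition iota :: "gen0 tm set \<Rightarrow> genS tm set" where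
  "iota X = {t. \<exists>s\<in>X. beq tyS R_DS (map_tm G0 s) t}"

end

theory Submission
  imports Defs
begin

text \<open>
  Powers of \<open>S\<close> can be pushed from the target of a morphism of \<open>D\<^sup>S\<close> to its source:
  for \<open>t : *\<^sup>n \<rightarrow> *\<^sup>m\<close> and exponents \<open>k\<close> the relations give
  \<open>t \<circ> (S^k\<^sub>1 \<otimes> \<dots> \<otimes> S^k\<^sub>n) = (S^k'\<^sub>1 \<otimes> \<dots> \<otimes> S^k'\<^sub>m) \<circ> \<iota> t'\<close> with \<open>t'\<close> free of \<open>S\<close>,
  computed generator by generator from \<open>\<Delta> S^x = (S^x \<otimes> S^x) \<tau>^x \<Delta>\<close>, \<open>\<epsilon> S^x = \<epsilon>\<close>,
  \<open>\<theta>\<^sub>\<plusminus> S^x = \<theta>\<^sub>\<plusminus>\<close> and \<open>\<omega>\<^sub>+ (S^x \<otimes> S^y) = \<omega>\<^sub>\<plusminus> \<tau>^-\<lfloor>(x+y)/2\<rfloor>\<close> (sign \<open>+\<close> iff \<open>x + y\<close> is even).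
  This computation of \<open>(k', t')\<close> from \<open>(k, t)\<close> respects all relations of \<open>D\<^sup>S\<close>; for
  coassociativity and counitality because twisting \<open>\<Delta>\<close> by a power of \<open>\<tau>\<close> preserves both.
  Taking \<open>k = 0\<close> and \<open>m = 0\<close> it yields an inverse of \<open>\<iota>\<close> on each \<open>End(n)\<close>; and \<open>\<iota>\<close> preserves
  convolution and identities because it fixes \<open>\<Delta>\<close> and \<open>\<epsilon>\<close>.
\<close>

section \<open>Calculus in a free braided strict monoidal category\<close>

declare beq.trans[trans]

fun tm_src :: "('g \<Rightarrow> nat \<times> nat) \<Rightarrow> 'g tm \<Rightarrow> nat" where
  "tm_src ty (Gen g) = fst (ty g)"
| "tm_src ty (Id n) = n"
| "tm_src ty (Comp f g) = tm_src ty g"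
| "tm_src ty (Tens f g) = tm_src ty f + tm_src ty g"
| "tm_src ty (Br m n) = m + n"
| "tm_src ty (BrInv m n) = n + m"

lemma tm_src_eq: "tmty ty t = Some (a, b) \<Longrightarrow> tm_src ty t = a"
  by (induction t arbitrary: a b) (auto split: option.splits prod.splits if_splits)

lemma tmty_CompE:
  assumes "tmty ty (Comp f g) = Some (a, b)"
  obtains c where "tmty ty g = Some (a, c)" "tmty ty f = Some (c, b)"
  using assms by (auto split: option.splits prod.splits if_splits)

lemma tmty_TensE:
  assumes "tmty ty (Tens f g) = Some (a, b)"
  obtains a1 b1 a2 b2 where "tmty ty f = Some (a1, b1)" "tmty ty g = Some (a2, b2)"
    "a = a1 + a2" "b = b1 + b2"
  using assms by (auto split: option.splits prod.splits if_splits)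

lemma beq_tmty_eq:
  assumes "beq ty R s t" and "\<forall>(x, y)\<in>R. tmty ty x = tmty ty y"
  shows "tmty ty s = tmty ty t"
  using assms by (induction rule: beq.induct) (auto split: option.splits prod.splits if_splits)

definition tm_zpow :: "'g tm \<Rightarrow> 'g tm \<Rightarrow> nat \<Rightarrow> int \<Rightarrow> 'g tm" where
  "tm_zpow P Q u a =
     (if 0 \<le> a then (Comp P ^^ nat a) (Id u) else (Comp Q ^^ nat (- a)) (Id u))"

lemma tm_zpow_0 [simp]: "tm_zpow P Q u 0 = Id u"
  by (simp add: tm_zpow_def)

lemma map_tm_funpow_Comp: "map_tm h ((Comp P ^^ n) (Id u)) = (Comp (map_tm h P) ^^ n) (Id u)"
  by (induction n) auto

lemma map_tm_zpow: "map_tm h (tm_zpow P Q u a) = tm_zpow (map_tm h P) (map_tm h Q) u a"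
  by (simp add: tm_zpow_def map_tm_funpow_Comp)

definition braid_pow :: "int \<Rightarrow> 'g tm" where
  "braid_pow = tm_zpow (Br 1 1) (BrInv 1 1) 2"

lemma map_tm_braid_pow [simp]: "map_tm h (braid_pow a) = braid_pow a"
  by (simp add: braid_pow_def map_tm_zpow)

text \<open>\<open>omega_pow \<omega>\<^sub>+ \<omega>\<^sub>- (x + y)\<close> is \<open>\<omega>\<^sub>+ (S^x \<otimes> S^y)\<close>: each \<open>S\<close> turns \<open>\<omega>\<^sub>+\<close> into \<open>\<omega>\<^sub>-\<close>
  and \<open>\<omega>\<^sub>-\<close> into \<open>\<omega>\<^sub>+ \<tau>\<^sup>-\<^sup>1\<close>.\<close>

definition omega_pow :: "'g \<Rightarrow> 'g \<Rightarrow> int \<Rightarrow> 'g tm" where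
  "omega_pow p m j = Comp (Gen (if even j then p else m)) (braid_pow (- (j div 2)))"

lemma map_tm_omega_pow [simp]: "map_tm h (omega_pow p m j) = omega_pow (h p) (h m) j"
  by (simp add: omega_pow_def)

context
  fixes ty :: "'g \<Rightarrow> nat \<times> nat" and R :: "('g tm \<times> 'g tm) set"
begin

abbreviation beq_rel (infix "\<approx>" 50) where "s \<approx> t \<equiv> beq ty R s t"

lemma comp_cong_left: "s \<approx> s' \<Longrightarrow> Comp s t \<approx> Comp s' t"
  by (rule beq.comp_cong) (auto intro: beq.refl)

lemma comp_cong_right: "t \<approx> t' \<Longrightarrow> Comp s t \<approx> Comp s t'"
  by (rule beq.comp_cong) (auto intro: beq.refl)

lemma tens_cong_left: "s \<approx> s' \<Longrightarrow> Tens s t \<approx> Tens s' t"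
  by (rule beq.tens_cong) (auto intro: beq.refl)

lemma tens_cong_right: "t \<approx> t' \<Longrightarrow> Tens s t \<approx> Tens s t'"
  by (rule beq.tens_cong) (auto intro: beq.refl)

lemma comp_Id_left: "tmty ty (Comp (Id m) f) \<noteq> None \<Longrightarrow> Comp (Id m) f \<approx> f"
  by (cases "tmty ty f") (auto split: if_splits intro: beq.id_l)

lemma comp_Id_right: "tmty ty (Comp f (Id n)) \<noteq> None \<Longrightarrow> Comp f (Id n) \<approx> f"
  by (cases "tmty ty f") (auto split: if_splits intro: beq.id_r)

lemma comp_assoc:
  "tmty ty (Comp (Comp f g) h) \<noteq> None \<Longrightarrow> Comp (Comp f g) h \<approx> Comp f (Comp g h)"
  by (auto split: option.splits prod.splits if_splits intro: beq.assoc)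

lemma tens_comp_interchange:
  "tmty ty (Tens (Comp f f') (Comp g g')) \<noteq> None \<Longrightarrow>
   Comp (Tens f g) (Tens f' g') \<approx> Tens (Comp f f') (Comp g g')"
  by (auto split: option.splits prod.splits if_splits intro: beq.interchange)

lemma tens_Id_1_1: "Tens (Id 1) (Id 1) \<approx> Id 2"
  by (metis beq.tens_id one_add_one)

lemma comp_tens_Id_1_1:
  assumes "tmty ty X = Some (2, n)"
  shows "Comp X (Tens (Id 1) (Id 1)) \<approx> X"
proof -
  have "Comp X (Tens (Id 1) (Id 1)) \<approx> Comp X (Id 2)"
    by (rule comp_cong_right, rule tens_Id_1_1)
  also have "\<dots> \<approx> X" by (rule comp_Id_right) (simp add: assms)
  finally show ?thesis .
qed

lemma tens_Id_comp:
  assumes "tmty ty (Comp g g') \<noteq> None"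
  shows "Tens (Id n) (Comp g g') \<approx> Comp (Tens (Id n) g) (Tens (Id n) g')"
proof -
  have "Tens (Id n) (Comp g g') \<approx> Tens (Comp (Id n) (Id n)) (Comp g g')"
    by (rule tens_cong_left, rule beq.sym, rule comp_Id_left) simp
  also have "\<dots> \<approx> Comp (Tens (Id n) g) (Tens (Id n) g')"
    by (rule beq.sym, rule tens_comp_interchange) (use assms in \<open>auto split: option.splits\<close>)
  finally show ?thesis .
qed

lemma comp_tens_Id:
  assumes "tmty ty (Comp g g') \<noteq> None"
  shows "Tens (Comp g g') (Id n) \<approx> Comp (Tens g (Id n)) (Tens g' (Id n))"
proof -
  have "Tens (Comp g g') (Id n) \<approx> Tens (Comp g g') (Comp (Id n) (Id n))"
    by (rule tens_cong_right, rule beq.sym, rule comp_Id_left) simp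
  also have "\<dots> \<approx> Comp (Tens g (Id n)) (Tens g' (Id n))"
    by (rule beq.sym, rule tens_comp_interchange) (use assms in \<open>auto split: option.splits\<close>)
  finally show ?thesis .
qed

lemma brinv_nat:
  assumes f: "tmty ty f = Some (m, m')" and g: "tmty ty g = Some (n, n')"
  shows "Comp (BrInv m' n') (Tens g f) \<approx> Comp (Tens f g) (BrInv m n)"
proof -
  have "Comp (BrInv m' n') (Tens g f) \<approx> Comp (Comp (BrInv m' n') (Tens g f)) (Id (n + m))"
    by (rule beq.sym, rule comp_Id_right) (simp add: f g)
  also have "\<dots> \<approx> Comp (Comp (BrInv m' n') (Tens g f)) (Comp (Br m n) (BrInv m n))"
    by (rule comp_cong_right, rule beq.sym, rule beq.br_inv1)
  also have "\<dots> \<approx> Comp (Comp (Comp (BrInv m' n') (Tens g f)) (Br m n)) (BrInv m n)"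
    by (rule beq.sym, rule comp_assoc) (simp add: f g)
  also have "\<dots> \<approx> Comp (Comp (BrInv m' n') (Comp (Tens g f) (Br m n))) (BrInv m n)"
    by (rule comp_cong_left, rule comp_assoc) (simp add: f g)
  also have "\<dots> \<approx> Comp (Comp (BrInv m' n') (Comp (Br m' n') (Tens f g))) (BrInv m n)"
    by (rule comp_cong_left, rule comp_cong_right, rule beq.sym, rule beq.br_nat[OF f g])
  also have "\<dots> \<approx> Comp (Comp (Comp (BrInv m' n') (Br m' n')) (Tens f g)) (BrInv m n)"
    by (rule comp_cong_left, rule beq.sym, rule comp_assoc) (simp add: f g)
  also have "\<dots> \<approx> Comp (Comp (Id (m' + n')) (Tens f g)) (BrInv m n)"
    by (rule comp_cong_left, rule comp_cong_left, rule beq.br_inv2)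
  also have "\<dots> \<approx> Comp (Tens f g) (BrInv m n)"
    by (rule comp_cong_left, rule comp_Id_left) (simp add: f g)
  finally show ?thesis .
qed

lemma idempotent_invertible_eq_Id:
  assumes "tmty ty X = Some (u, u)" and "tmty ty Y = Some (u, u)"
    and idem: "X \<approx> Comp X X" and inv: "Comp X Y \<approx> Id u"
  shows "X \<approx> Id u"
proof -
  have "Id u \<approx> Comp X Y" by (rule beq.sym, rule inv)
  also have "\<dots> \<approx> Comp (Comp X X) Y" by (rule comp_cong_left, rule idem)
  also have "\<dots> \<approx> Comp X (Comp X Y)" by (rule comp_assoc) (simp add: assms)
  also have "\<dots> \<approx> Comp X (Id u)" by (rule comp_cong_right, rule inv)
  also have "\<dots> \<approx> X" by (rule comp_Id_right) (simp add: assms)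
  finally show ?thesis by (rule beq.sym)
qed

text \<open>With an empty strand the hexagon axioms make \<open>Br 1 0\<close> and \<open>Br 0 1\<close> idempotent.\<close>

lemma Br_1_0: "Br 1 0 \<approx> Id 1"
proof (rule idempotent_invertible_eq_Id)
  have "Br 1 0 \<approx> Comp (Tens (Id 0) (Br 1 0)) (Tens (Br 1 0) (Id 0))"
    using beq.hex2[of ty R 1 0 0] by simp
  also have "\<dots> \<approx> Comp (Br 1 0) (Br 1 0)"
    by (rule beq.comp_cong, rule beq.tens_unit_l, rule beq.tens_unit_r)
  finally show "Br 1 0 \<approx> Comp (Br 1 0) (Br 1 0)" .
  show "Comp (Br 1 0) (BrInv 1 0) \<approx> Id 1" using beq.br_inv1[of ty R 1 0] by simp
qed simp_all

lemma Br_0_1: "Br 0 1 \<approx> Id 1"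
proof (rule idempotent_invertible_eq_Id)
  have "Br 0 1 \<approx> Comp (Tens (Br 0 1) (Id 0)) (Tens (Id 0) (Br 0 1))"
    using beq.hex1[of ty R 0 0 1] by simp
  also have "\<dots> \<approx> Comp (Br 0 1) (Br 0 1)"
    by (rule beq.comp_cong, rule beq.tens_unit_r, rule beq.tens_unit_l)
  finally show "Br 0 1 \<approx> Comp (Br 0 1) (Br 0 1)" .
  show "Comp (Br 0 1) (BrInv 0 1) \<approx> Id 1" using beq.br_inv1[of ty R 0 1] by simp
qed simp_all

context
  fixes P Q :: "'g tm" and u :: nat
  assumes tmty_P: "tmty ty P = Some (u, u)" and tmty_Q: "tmty ty Q = Some (u, u)"
    and P_Q: "Comp P Q \<approx> Id u" and Q_P: "Comp Q P \<approx> Id u"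
begin

lemma tmty_funpow_Comp:
  "tmty ty ((Comp P ^^ n) (Id u)) = Some (u, u)" "tmty ty ((Comp Q ^^ n) (Id u)) = Some (u, u)"
  by (induction n) (auto simp: tmty_P tmty_Q)

lemma tmty_tm_zpow: "tmty ty (tm_zpow P Q u a) = Some (u, u)"
  by (simp add: tm_zpow_def tmty_funpow_Comp)

lemma tm_zpow_Suc: "Comp P (tm_zpow P Q u a) \<approx> tm_zpow P Q u (a + 1)"
proof (cases "0 \<le> a")
  case True
  then have "nat (a + 1) = Suc (nat a)" by simp
  then show ?thesis using True by (simp add: tm_zpow_def beq.refl)
next
  case False
  then obtain m where m: "nat (- a) = Suc m" by (cases "nat (- a)") auto
  have "Comp P (tm_zpow P Q u a) = Comp P (Comp Q ((Comp Q ^^ m) (Id u)))"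
    using False m by (simp add: tm_zpow_def)
  also have "\<dots> \<approx> Comp (Comp P Q) ((Comp Q ^^ m) (Id u))"
    by (rule beq.sym, rule comp_assoc) (simp add: tmty_P tmty_Q tmty_funpow_Comp)
  also have "\<dots> \<approx> Comp (Id u) ((Comp Q ^^ m) (Id u))"
    by (rule comp_cong_left, rule P_Q)
  also have "\<dots> \<approx> (Comp Q ^^ m) (Id u)"
    by (rule comp_Id_left) (simp add: tmty_funpow_Comp)
  also have "\<dots> = tm_zpow P Q u (a + 1)"
  proof -
    have "nat (- (a + 1)) = m" using m by linarith
    then show ?thesis using False by (cases "0 \<le> a + 1") (auto simp: tm_zpow_def)
  qed
  finally show ?thesis .
qed

lemma tm_zpow_pred: "Comp Q (tm_zpow P Q u a) \<approx> tm_zpow P Q u (a - 1)"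
proof (cases "0 < a")
  case False
  then have "nat (- (a - 1)) = Suc (nat (- a))" by simp
  then show ?thesis using False by (simp add: tm_zpow_def beq.refl)
next
  case True
  then obtain m where m: "nat a = Suc m" by (cases "nat a") auto
  have "Comp Q (tm_zpow P Q u a) = Comp Q (Comp P ((Comp P ^^ m) (Id u)))"
    using True m by (simp add: tm_zpow_def)
  also have "\<dots> \<approx> Comp (Comp Q P) ((Comp P ^^ m) (Id u))"
    by (rule beq.sym, rule comp_assoc) (simp add: tmty_P tmty_Q tmty_funpow_Comp)
  also have "\<dots> \<approx> Comp (Id u) ((Comp P ^^ m) (Id u))"
    by (rule comp_cong_left, rule Q_P)
  also have "\<dots> \<approx> (Comp P ^^ m) (Id u)"
    by (rule comp_Id_left) (simp add: tmty_funpow_Comp)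
  also have "\<dots> = tm_zpow P Q u (a - 1)"
    using True m by (simp add: tm_zpow_def nat_diff_distrib)
  finally show ?thesis .
qed

lemma comp_tm_zpow_absorb:
  assumes g: "tmty ty g = Some (u, v)" and gP: "Comp g P \<approx> g"
  shows "Comp g (tm_zpow P Q u a) \<approx> g"
proof (induction a rule: int_induct[where k = 0])
  case base
  show ?case by (simp, rule comp_Id_right) (simp add: g)
next
  case (step1 i)
  have "Comp g (tm_zpow P Q u (i + 1)) \<approx> Comp g (Comp P (tm_zpow P Q u i))"
    by (rule comp_cong_right, rule beq.sym, rule tm_zpow_Suc)
  also have "\<dots> \<approx> Comp (Comp g P) (tm_zpow P Q u i)"
    by (rule beq.sym, rule comp_assoc) (simp add: g tmty_P tmty_tm_zpow)
  also have "\<dots> \<approx> Comp g (tm_zpow P Q u i)" by (rule comp_cong_left, rule gP)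
  finally show ?case using step1.IH by (rule beq.trans)
next
  case (step2 i)
  have gQ: "Comp g Q \<approx> g"
  proof -
    have "Comp g Q \<approx> Comp (Comp g P) Q" by (rule comp_cong_left, rule beq.sym, rule gP)
    also have "\<dots> \<approx> Comp g (Comp P Q)" by (rule comp_assoc) (simp add: g tmty_P tmty_Q)
    also have "\<dots> \<approx> Comp g (Id u)" by (rule comp_cong_right, rule P_Q)
    also have "\<dots> \<approx> g" by (rule comp_Id_right) (simp add: g)
    finally show ?thesis .
  qed
  have "Comp g (tm_zpow P Q u (i - 1)) \<approx> Comp g (Comp Q (tm_zpow P Q u i))"
    by (rule comp_cong_right, rule beq.sym, rule tm_zpow_pred)
  also have "\<dots> \<approx> Comp (Comp g Q) (tm_zpow P Q u i)"
    by (rule beq.sym, rule comp_assoc) (simp add: g tmty_Q tmty_tm_zpow)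
  also have "\<dots> \<approx> Comp g (tm_zpow P Q u i)" by (rule comp_cong_left, rule gQ)
  finally show ?case using step2.IH by (rule beq.trans)
qed

lemma tm_zpow_add: "Comp (tm_zpow P Q u a) (tm_zpow P Q u b) \<approx> tm_zpow P Q u (a + b)"
proof (induction a rule: int_induct[where k = 0])
  case base
  show ?case by (simp, rule comp_Id_left) (simp add: tmty_tm_zpow)
next
  case (step1 i)
  have "Comp (tm_zpow P Q u (i + 1)) (tm_zpow P Q u b)
      \<approx> Comp (Comp P (tm_zpow P Q u i)) (tm_zpow P Q u b)"
    by (rule comp_cong_left, rule beq.sym, rule tm_zpow_Suc)
  also have "\<dots> \<approx> Comp P (Comp (tm_zpow P Q u i) (tm_zpow P Q u b))"
    by (rule comp_assoc) (simp add: tmty_P tmty_tm_zpow)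
  also have "\<dots> \<approx> Comp P (tm_zpow P Q u (i + b))"
    by (rule comp_cong_right, rule step1.IH)
  also have "\<dots> \<approx> tm_zpow P Q u (i + b + 1)" by (rule tm_zpow_Suc)
  finally show ?case by (simp add: algebra_simps)
next
  case (step2 i)
  have "Comp (tm_zpow P Q u (i - 1)) (tm_zpow P Q u b)
      \<approx> Comp (Comp Q (tm_zpow P Q u i)) (tm_zpow P Q u b)"
    by (rule comp_cong_left, rule beq.sym, rule tm_zpow_pred)
  also have "\<dots> \<approx> Comp Q (Comp (tm_zpow P Q u i) (tm_zpow P Q u b))"
    by (rule comp_assoc) (simp add: tmty_Q tmty_tm_zpow)
  also have "\<dots> \<approx> Comp Q (tm_zpow P Q u (i + b))"
    by (rule comp_cong_right, rule step2.IH)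
  also have "\<dots> \<approx> tm_zpow P Q u (i + b - 1)" by (rule tm_zpow_pred)
  finally show ?case by (simp add: algebra_simps)
qed

end

lemma Br_BrInv_1_1: "Comp (Br 1 1) (BrInv 1 1) \<approx> Id 2"
  by (metis beq.br_inv1 one_add_one)

lemma BrInv_Br_1_1: "Comp (BrInv 1 1) (Br 1 1) \<approx> Id 2"
  by (metis beq.br_inv2 one_add_one)

lemma tmty_braid_pow [simp]: "tmty ty (braid_pow a) = Some (2, 2)"
  unfolding braid_pow_def by (rule tmty_tm_zpow[OF _ _ Br_BrInv_1_1 BrInv_Br_1_1]) simp_all

lemma braid_pow_Suc: "Comp (Br 1 1) (braid_pow a) \<approx> braid_pow (a + 1)"
  unfolding braid_pow_def by (rule tm_zpow_Suc[OF _ _ Br_BrInv_1_1 BrInv_Br_1_1]) simp_all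

lemma braid_pow_pred: "Comp (BrInv 1 1) (braid_pow a) \<approx> braid_pow (a - 1)"
  unfolding braid_pow_def by (rule tm_zpow_pred[OF _ _ Br_BrInv_1_1 BrInv_Br_1_1]) simp_all

lemma braid_pow_add: "Comp (braid_pow a) (braid_pow b) \<approx> braid_pow (a + b)"
  unfolding braid_pow_def by (rule tm_zpow_add[OF _ _ Br_BrInv_1_1 BrInv_Br_1_1]) simp_all

lemma braid_pow_1: "braid_pow 1 \<approx> Br 1 1"
  unfolding braid_pow_def tm_zpow_def by (simp, rule comp_Id_right) simp

lemma intertwine_comp:
  assumes "tmty ty A = Some (n, n)" "tmty ty A' = Some (n, n)" "tmty ty A'' = Some (n, n)"
    and "tmty ty X = Some (n, n)" "tmty ty B = Some (n, n)"
    and X: "Comp X A \<approx> Comp A' X" and B: "Comp B A' \<approx> Comp A'' B"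
  shows "Comp (Comp B X) A \<approx> Comp A'' (Comp B X)"
proof -
  have "Comp (Comp B X) A \<approx> Comp B (Comp X A)" by (rule comp_assoc) (simp add: assms)
  also have "\<dots> \<approx> Comp B (Comp A' X)" by (rule comp_cong_right, rule X)
  also have "\<dots> \<approx> Comp (Comp B A') X"
    by (rule beq.sym, rule comp_assoc) (simp add: assms)
  also have "\<dots> \<approx> Comp (Comp A'' B) X" by (rule comp_cong_left, rule B)
  also have "\<dots> \<approx> Comp A'' (Comp B X)" by (rule comp_assoc) (simp add: assms)
  finally show ?thesis .
qed

lemma braid_pow_nat:
  assumes f: "tmty ty f = Some (1, 1)" and g: "tmty ty g = Some (1, 1)"
  shows "Comp (braid_pow a) (Tens f g)
    \<approx> Comp (if even a then Tens f g else Tens g f) (braid_pow a)"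
proof (induction a rule: int_induct[where k = 0])
  let ?T = "\<lambda>j :: int. if even j then Tens f g else Tens g f"
  {
    case base
    have "Comp (braid_pow 0) (Tens f g) \<approx> Tens f g"
      by (simp add: braid_pow_def, rule comp_Id_left) (simp add: f g)
    also have "\<dots> \<approx> Comp (Tens f g) (braid_pow 0)"
      by (rule beq.sym, simp add: braid_pow_def, rule comp_Id_right) (simp add: f g)
    finally show ?case by simp
  next
    case (step1 i)
    have "Comp (Br 1 1) (?T i) \<approx> Comp (?T (i + 1)) (Br 1 1)"
      using beq.br_nat[OF f g] beq.br_nat[OF g f] by auto
    note swap = intertwine_comp[OF _ _ _ _ _ step1.IH this]
    have "Comp (braid_pow (i + 1)) (Tens f g) \<approx> Comp (Comp (Br 1 1) (braid_pow i)) (Tens f g)"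
      by (rule comp_cong_left, rule beq.sym, rule braid_pow_Suc)
    also have "\<dots> \<approx> Comp (?T (i + 1)) (Comp (Br 1 1) (braid_pow i))"
      by (rule swap) (simp_all add: f g)
    also have "\<dots> \<approx> Comp (?T (i + 1)) (braid_pow (i + 1))"
      by (rule comp_cong_right, rule braid_pow_Suc)
    finally show ?case .
  next
    case (step2 i)
    have "Comp (BrInv 1 1) (?T i) \<approx> Comp (?T (i - 1)) (BrInv 1 1)"
      using brinv_nat[OF f g] brinv_nat[OF g f] by auto
    note swap = intertwine_comp[OF _ _ _ _ _ step2.IH this]
    have "Comp (braid_pow (i - 1)) (Tens f g) \<approx> Comp (Comp (BrInv 1 1) (braid_pow i)) (Tens f g)"
      by (rule comp_cong_left, rule beq.sym, rule braid_pow_pred)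
    also have "\<dots> \<approx> Comp (?T (i - 1)) (Comp (BrInv 1 1) (braid_pow i))"
      by (rule swap) (simp_all add: f g)
    also have "\<dots> \<approx> Comp (?T (i - 1)) (braid_pow (i - 1))"
      by (rule comp_cong_right, rule braid_pow_pred)
    finally show ?case .
  }
qed

lemma tmty_omega_pow [simp]:
  "ty p = (2, 0) \<Longrightarrow> ty m = (2, 0) \<Longrightarrow> tmty ty (omega_pow p m j) = Some (2, 0)"
  by (simp add: omega_pow_def)

lemma omega_pow_Br:
  assumes "ty p = (2, 0)" "ty m = (2, 0)"
  shows "Comp (omega_pow p m (j + 2)) (Br 1 1) \<approx> omega_pow p m j"
proof -
  let ?g = "Gen (if even j then p else m)" and ?k = "- (j div 2) - 1"
  have "(j + 2) div 2 = j div 2 + 1" by presburger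
  then have shift: "omega_pow p m (j + 2) = Comp ?g (braid_pow ?k)" by (simp add: omega_pow_def)
  have "Comp (omega_pow p m (j + 2)) (Br 1 1) \<approx> Comp ?g (Comp (braid_pow ?k) (Br 1 1))"
    unfolding shift by (rule comp_assoc) (simp add: assms)
  also have "\<dots> \<approx> Comp ?g (Comp (braid_pow ?k) (braid_pow 1))"
    by (rule comp_cong_right, rule comp_cong_right, rule beq.sym, rule braid_pow_1)
  also have "\<dots> \<approx> Comp ?g (braid_pow (?k + 1))"
    by (rule comp_cong_right, rule braid_pow_add)
  finally show ?thesis by (simp add: omega_pow_def)
qed

subsection \<open>Twisting a coalgebra by powers of the braiding\<close>

definition coassoc :: "'g tm \<Rightarrow> bool" where
  "coassoc E \<longleftrightarrow> Comp (Tens (Id 1) E) E \<approx> Comp (Tens E (Id 1)) E"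

definition counital :: "'g tm \<Rightarrow> 'g tm \<Rightarrow> bool" where
  "counital e E \<longleftrightarrow> Comp (Tens (Id 1) e) E \<approx> Id 1 \<and> Comp (Tens e (Id 1)) E \<approx> Id 1"

lemma coassoc_cong: "E \<approx> E' \<Longrightarrow> coassoc E \<Longrightarrow> coassoc E'"
  unfolding coassoc_def
  by (meson beq.sym beq.trans tens_cong_left tens_cong_right comp_cong_left comp_cong_right)

lemma counital_cong: "E \<approx> E' \<Longrightarrow> counital e E \<Longrightarrow> counital e E'"
  unfolding counital_def by (meson beq.sym beq.trans comp_cong_right)

definition half_twist3 :: "'g tm" where
  "half_twist3 = Comp (Br 2 1) (Tens (Br 1 1) (Id 1))"

lemma tmty_half_twist3 [simp]: "tmty ty half_twist3 = Some (3, 3)"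
  by (simp add: half_twist3_def)

lemma half_twist3_cancel:
  assumes P: "tmty ty P = Some (a, 3)" and Q: "tmty ty Q = Some (a, 3)"
    and eq: "Comp half_twist3 P \<approx> Comp half_twist3 Q"
  shows "P \<approx> Q"
proof -
  let ?B = "Tens (Br 1 1) (Id 1)" and ?B' = "Tens (BrInv 1 1) (Id 1)"
  let ?Y' = "Comp ?B' (BrInv 2 1)"
  have inv: "Comp ?Y' half_twist3 \<approx> Id 3"
  proof -
    have "Comp ?Y' half_twist3 \<approx> Comp ?B' (Comp (BrInv 2 1) half_twist3)"
      by (rule comp_assoc) simp
    also have "\<dots> \<approx> Comp ?B' (Comp (Comp (BrInv 2 1) (Br 2 1)) ?B)"
      unfolding half_twist3_def by (rule comp_cong_right, rule beq.sym, rule comp_assoc) simp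
    also have "\<dots> \<approx> Comp ?B' (Comp (Id 3) ?B)"
      by (rule comp_cong_right, rule comp_cong_left) (use beq.br_inv2[of ty R 2 1] in simp)
    also have "\<dots> \<approx> Comp ?B' ?B" by (rule comp_cong_right, rule comp_Id_left) simp
    also have "\<dots> \<approx> Tens (Comp (BrInv 1 1) (Br 1 1)) (Comp (Id 1) (Id 1))"
      by (rule tens_comp_interchange) simp
    also have "\<dots> \<approx> Tens (Id 2) (Id 1)"
      by (rule beq.tens_cong, rule BrInv_Br_1_1, rule comp_Id_left) simp
    also have "\<dots> \<approx> Id 3" using beq.tens_id[of ty R 2 1] by simp
    finally show ?thesis .
  qed
  have "P \<approx> Comp (Id 3) P" by (rule beq.sym, rule comp_Id_left) (simp add: P)
  also have "\<dots> \<approx> Comp (Comp ?Y' half_twist3) P"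
    by (rule comp_cong_left, rule beq.sym, rule inv)
  also have "\<dots> \<approx> Comp ?Y' (Comp half_twist3 P)" by (rule comp_assoc) (simp add: P)
  also have "\<dots> \<approx> Comp ?Y' (Comp half_twist3 Q)" by (rule comp_cong_right, rule eq)
  also have "\<dots> \<approx> Comp (Comp ?Y' half_twist3) Q"
    by (rule beq.sym, rule comp_assoc) (simp add: Q)
  also have "\<dots> \<approx> Comp (Id 3) Q" by (rule comp_cong_left, rule inv)
  also have "\<dots> \<approx> Q" by (rule comp_Id_left) (simp add: Q)
  finally show ?thesis .
qed

text \<open>The two sides of coassociativity for the twisted coproduct \<open>\<tau> E\<close> are the half twist
  applied to the two sides of coassociativity for \<open>E\<close>, in the opposite order.\<close>

lemma coassoc_twisted_left:
  assumes E: "tmty ty E = Some (1, 2)"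
  shows "Comp (Tens (Id 1) (Comp (Br 1 1) E)) (Comp (Br 1 1) E)
    \<approx> Comp half_twist3 (Comp (Tens E (Id 1)) E)"
proof -
  let ?A = "Tens (Id 1) (Br 1 1)" and ?B = "Tens (Br 1 1) (Id 1)"
  have "Comp (Tens (Id 1) (Comp (Br 1 1) E)) (Comp (Br 1 1) E)
      \<approx> Comp (Comp ?A (Tens (Id 1) E)) (Comp (Br 1 1) E)"
    by (rule comp_cong_left, rule tens_Id_comp) (simp add: E)
  also have "\<dots> \<approx> Comp ?A (Comp (Tens (Id 1) E) (Comp (Br 1 1) E))"
    by (rule comp_assoc) (simp add: E)
  also have "\<dots> \<approx> Comp ?A (Comp (Comp (Tens (Id 1) E) (Br 1 1)) E)"
    by (rule comp_cong_right, rule beq.sym, rule comp_assoc) (simp add: E)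
  also have "\<dots> \<approx> Comp ?A (Comp (Comp (Br 2 1) (Tens E (Id 1))) E)"
    by (rule comp_cong_right, rule comp_cong_left, rule beq.sym, rule beq.br_nat) (simp_all add: E)
  also have "\<dots> \<approx> Comp ?A (Comp (Br 2 1) (Comp (Tens E (Id 1)) E))"
    by (rule comp_cong_right, rule comp_assoc) (simp add: E)
  also have "\<dots> \<approx> Comp (Comp ?A (Br 2 1)) (Comp (Tens E (Id 1)) E)"
    by (rule beq.sym, rule comp_assoc) (simp add: E)
  also have "\<dots> \<approx> Comp (Comp (Br 2 1) ?B) (Comp (Tens E (Id 1)) E)"
    by (rule comp_cong_left, rule beq.sym, rule beq.br_nat) simp_all
  finally show ?thesis unfolding half_twist3_def .
qed

lemma coassoc_twisted_right:
  assumes E: "tmty ty E = Some (1, 2)"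
  shows "Comp (Tens (Comp (Br 1 1) E) (Id 1)) (Comp (Br 1 1) E)
    \<approx> Comp half_twist3 (Comp (Tens (Id 1) E) E)"
proof -
  let ?A = "Tens (Id 1) (Br 1 1)" and ?B = "Tens (Br 1 1) (Id 1)"
  have "Comp (Tens (Comp (Br 1 1) E) (Id 1)) (Comp (Br 1 1) E)
      \<approx> Comp (Comp ?B (Tens E (Id 1))) (Comp (Br 1 1) E)"
    by (rule comp_cong_left, rule comp_tens_Id) (simp add: E)
  also have "\<dots> \<approx> Comp ?B (Comp (Tens E (Id 1)) (Comp (Br 1 1) E))"
    by (rule comp_assoc) (simp add: E)
  also have "\<dots> \<approx> Comp ?B (Comp (Comp (Tens E (Id 1)) (Br 1 1)) E)"
    by (rule comp_cong_right, rule beq.sym, rule comp_assoc) (simp add: E)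
  also have "\<dots> \<approx> Comp ?B (Comp (Comp (Br 1 2) (Tens (Id 1) E)) E)"
    by (rule comp_cong_right, rule comp_cong_left, rule beq.sym, rule beq.br_nat) (simp_all add: E)
  also have "\<dots> \<approx> Comp ?B (Comp (Br 1 2) (Comp (Tens (Id 1) E) E))"
    by (rule comp_cong_right, rule comp_assoc) (simp add: E)
  also have "\<dots> \<approx> Comp (Comp ?B (Br 1 2)) (Comp (Tens (Id 1) E) E)"
    by (rule beq.sym, rule comp_assoc) (simp add: E)
  also have "\<dots> \<approx> Comp (Comp ?B (Comp ?A ?B)) (Comp (Tens (Id 1) E) E)"
    by (rule comp_cong_left, rule comp_cong_right)
      (use beq.hex2[of ty R 1 1 1] in \<open>simp add: numeral_2_eq_2\<close>)
  also have "\<dots> \<approx> Comp (Comp (Comp ?B ?A) ?B) (Comp (Tens (Id 1) E) E)"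
    by (rule comp_cong_left, rule beq.sym, rule comp_assoc) simp
  also have "\<dots> \<approx> Comp (Comp (Br 2 1) ?B) (Comp (Tens (Id 1) E) E)"
    by (rule comp_cong_left, rule comp_cong_left, rule beq.sym)
      (use beq.hex1[of ty R 1 1 1] in \<open>simp add: numeral_2_eq_2\<close>)
  finally show ?thesis unfolding half_twist3_def .
qed

lemma coassoc_Br_iff:
  assumes E: "tmty ty E = Some (1, 2)"
  shows "coassoc (Comp (Br 1 1) E) \<longleftrightarrow> coassoc E"
proof
  assume "coassoc (Comp (Br 1 1) E)"
  then have "Comp half_twist3 (Comp (Tens (Id 1) E) E) \<approx> Comp half_twist3 (Comp (Tens E (Id 1)) E)"
    using coassoc_twisted_left[OF E] coassoc_twisted_right[OF E] unfolding coassoc_def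
    by (meson beq.sym beq.trans)
  then show "coassoc E"
    unfolding coassoc_def by (rule half_twist3_cancel[rotated 2]) (simp_all add: E)
next
  assume "coassoc E"
  then show "coassoc (Comp (Br 1 1) E)"
    using comp_cong_right[of _ _ half_twist3] coassoc_twisted_left[OF E] coassoc_twisted_right[OF E]
    unfolding coassoc_def by (meson beq.sym beq.trans)
qed

lemma counital_Br_iff:
  assumes e: "tmty ty e = Some (1, 0)" and E: "tmty ty E = Some (1, 2)"
  shows "counital e (Comp (Br 1 1) E) \<longleftrightarrow> counital e E"
proof -
  have "Comp (Tens (Id 1) e) (Comp (Br 1 1) E) \<approx> Comp (Tens e (Id 1)) E"
  proof -
    have "Comp (Tens (Id 1) e) (Comp (Br 1 1) E) \<approx> Comp (Comp (Tens (Id 1) e) (Br 1 1)) E"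
      by (rule beq.sym, rule comp_assoc) (simp add: e E)
    also have "\<dots> \<approx> Comp (Comp (Br 0 1) (Tens e (Id 1))) E"
      by (rule comp_cong_left, rule beq.sym, rule beq.br_nat) (simp_all add: e)
    also have "\<dots> \<approx> Comp (Comp (Id 1) (Tens e (Id 1))) E"
      by (rule comp_cong_left, rule comp_cong_left, rule Br_0_1)
    also have "\<dots> \<approx> Comp (Tens e (Id 1)) E"
      by (rule comp_cong_left, rule comp_Id_left) (simp add: e)
    finally show ?thesis .
  qed
  moreover have "Comp (Tens e (Id 1)) (Comp (Br 1 1) E) \<approx> Comp (Tens (Id 1) e) E"
  proof -
    have "Comp (Tens e (Id 1)) (Comp (Br 1 1) E) \<approx> Comp (Comp (Tens e (Id 1)) (Br 1 1)) E"
      by (rule beq.sym, rule comp_assoc) (simp add: e E)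
    also have "\<dots> \<approx> Comp (Comp (Br 1 0) (Tens (Id 1) e)) E"
      by (rule comp_cong_left, rule beq.sym, rule beq.br_nat) (simp_all add: e)
    also have "\<dots> \<approx> Comp (Comp (Id 1) (Tens (Id 1) e)) E"
      by (rule comp_cong_left, rule comp_cong_left, rule Br_1_0)
    also have "\<dots> \<approx> Comp (Tens (Id 1) e) E"
      by (rule comp_cong_left, rule comp_Id_left) (simp add: e)
    finally show ?thesis .
  qed
  ultimately show ?thesis unfolding counital_def by (meson beq.sym beq.trans)
qed

lemma braid_pow_twist_induct:
  assumes E: "tmty ty E = Some (1, 2)"
    and cong: "\<And>E E'. E \<approx> E' \<Longrightarrow> Q E \<Longrightarrow> Q E'"
    and Br_iff: "\<And>E. tmty ty E = Some (1, 2) \<Longrightarrow> Q (Comp (Br 1 1) E) \<longleftrightarrow> Q E"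
    and "Q E"
  shows "Q (Comp (braid_pow a) E)"
proof (induction a rule: int_induct[where k = 0])
  case base
  show ?case
    by (rule cong[OF _ \<open>Q E\<close>], simp add: braid_pow_def, rule beq.sym, rule comp_Id_left)
      (simp add: E)
next
  case (step1 i)
  have "Comp (Br 1 1) (Comp (braid_pow i) E) \<approx> Comp (braid_pow (i + 1)) E"
    by (rule beq.trans, rule beq.sym, rule comp_assoc)
      (simp add: E, rule comp_cong_left, rule braid_pow_Suc)
  moreover have "Q (Comp (Br 1 1) (Comp (braid_pow i) E))" using step1.IH Br_iff E by simp
  ultimately show ?case by (rule cong)
next
  case (step2 i)
  have "Comp (braid_pow i) E \<approx> Comp (Comp (Br 1 1) (braid_pow (i - 1))) E"
    by (rule comp_cong_left, rule beq.sym) (use braid_pow_Suc[where a = "i - 1"] in simp)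
  also have "\<dots> \<approx> Comp (Br 1 1) (Comp (braid_pow (i - 1)) E)"
    by (rule comp_assoc) (simp add: E)
  finally have "Q (Comp (Br 1 1) (Comp (braid_pow (i - 1)) E))" using step2.IH by (rule cong)
  then show ?case using Br_iff E by simp
qed

lemma coassoc_braid_pow:
  assumes "tmty ty E = Some (1, 2)" and "coassoc E"
  shows "coassoc (Comp (braid_pow a) E)"
  using assms(1) coassoc_cong coassoc_Br_iff assms(2) by (rule braid_pow_twist_induct)

lemma counital_braid_pow:
  assumes "tmty ty e = Some (1, 0)" and "tmty ty E = Some (1, 2)" and "counital e E"
  shows "counital e (Comp (braid_pow a) E)"
  using assms(2) counital_cong counital_Br_iff[OF assms(1)] assms(3)
  by (rule braid_pow_twist_induct)

end

section \<open>Pushing powers of \<open>S\<close> towards the source\<close>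

text \<open>\<open>push_S k t = (k', t')\<close> means \<open>t \<circ> S\<^sup>k \<approx> S\<^sup>k\<^sup>' \<circ> \<iota> t'\<close> (lemma \<open>push_S_sound\<close>), where \<open>k\<close> and
  \<open>k'\<close> list the exponents of \<open>S\<close> on the input and output strands.\<close>

fun push_gen :: "int list \<Rightarrow> genS \<Rightarrow> int list \<times> gen0 tm" where
  "push_gen k G_S = (map (\<lambda>x. x + 1) k, Id 1)"
| "push_gen k G_Sinv = (map (\<lambda>x. x - 1) k, Id 1)"
| "push_gen k (G0 G_Delta) = ([hd k, hd k], Comp (braid_pow (hd k)) (Gen G_Delta))"
| "push_gen k (G0 G_Eps) = ([], Gen G_Eps)"
| "push_gen k (G0 G_ThP) = ([], Gen G_ThP)"
| "push_gen k (G0 G_ThM) = ([], Gen G_ThM)"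
| "push_gen k (G0 G_OmP) = ([], omega_pow G_OmP G_OmM (k ! 0 + k ! 1))"
| "push_gen k (G0 G_OmM) = ([], omega_pow G_OmP G_OmM (k ! 0 + k ! 1 + 1))"

fun push_S :: "int list \<Rightarrow> genS tm \<Rightarrow> int list \<times> gen0 tm" where
  "push_S k (Gen g) = push_gen k g"
| "push_S k (Id n) = (k, Id n)"
| "push_S k (Comp f g) =
     (let p = push_S k g; q = push_S (fst p) f in (fst q, Comp (snd q) (snd p)))"
| "push_S k (Tens f g) =
     (let p = push_S (take (tm_src tyS f) k) f; q = push_S (drop (tm_src tyS f) k) g
      in (fst p @ fst q, Tens (snd p) (snd q)))"
| "push_S k (Br m n) = (drop m k @ take m k, Br m n)"
| "push_S k (BrInv m n) = (drop n k @ take n k, BrInv m n)"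

abbreviation beq_D (infix "\<approx>\<^sub>D" 50) where "s \<approx>\<^sub>D t \<equiv> beq ty0 R_D s t"
abbreviation beq_DS (infix "\<approx>\<^sub>S" 50) where "s \<approx>\<^sub>S t \<equiv> beq tyS R_DS s t"

lemma D_coassoc: "coassoc ty0 R_D (Gen G_Delta)"
  unfolding coassoc_def by (rule beq.rel) (simp add: R_D_def coalg_rels_def)

lemma D_counital: "counital ty0 R_D (Gen G_Eps) (Gen G_Delta)"
  unfolding counital_def by (auto intro!: beq.rel simp: R_D_def coalg_rels_def)

lemma push_S_relation:
  assumes "(s, t) \<in> R_DS" and "tmty tyS s = Some (a, b)" and "length k = a"
  shows "fst (push_S k s) = fst (push_S k t) \<and> snd (push_S k s) \<approx>\<^sub>D snd (push_S k t)"
proof -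
  let ?\<Delta> = "\<lambda>x. Comp (braid_pow x) (Gen G_Delta)" and ?\<omega> = "omega_pow G_OmP G_OmM"
  have Delta_S:
    "Comp (?\<Delta> (x + 1)) (Id 1) \<approx>\<^sub>D Comp (Tens (Id 1) (Id 1)) (Comp (Br 1 1) (?\<Delta> x))" for x
  proof -
    have "Comp (?\<Delta> (x + 1)) (Id 1) \<approx>\<^sub>D ?\<Delta> (x + 1)"
      by (rule comp_Id_right) simp
    also have "\<dots> \<approx>\<^sub>D Comp (Comp (Br 1 1) (braid_pow x)) (Gen G_Delta)"
      by (rule comp_cong_left, rule beq.sym, rule braid_pow_Suc)
    also have "\<dots> \<approx>\<^sub>D Comp (Br 1 1) (?\<Delta> x)" by (rule comp_assoc) simp
    also have "\<dots> \<approx>\<^sub>D Comp (Id 2) (Comp (Br 1 1) (?\<Delta> x))"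
      by (rule beq.sym, rule comp_Id_left) simp
    also have "\<dots> \<approx>\<^sub>D Comp (Tens (Id 1) (Id 1)) (Comp (Br 1 1) (?\<Delta> x))"
      by (rule comp_cong_left, rule beq.sym, rule tens_Id_1_1)
    finally show ?thesis .
  qed
  have omega: "Comp (?\<omega> i) (Tens (Id 1) (Id 1)) \<approx>\<^sub>D ?\<omega> j" if "i = j" for i j
    unfolding that by (rule comp_tens_Id_1_1) simp
  have omega_Br: "Comp (?\<omega> i) (Tens (Id 1) (Id 1)) \<approx>\<^sub>D Comp (?\<omega> j) (Br 1 1)"
    if "i + 2 = j" for i j
  proof -
    have "Comp (?\<omega> i) (Tens (Id 1) (Id 1)) \<approx>\<^sub>D ?\<omega> i" by (rule omega) simp
    also have "\<dots> \<approx>\<^sub>D Comp (?\<omega> j) (Br 1 1)"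
      unfolding that[symmetric] by (rule beq.sym, rule omega_pow_Br) simp_all
    finally show ?thesis .
  qed
  note coassoc = coassoc_braid_pow[OF _ D_coassoc, unfolded coassoc_def]
  note counital = counital_braid_pow[OF _ _ D_counital, unfolded counital_def]
  note rel_simps = Let_def Delta_S omega omega_Br coassoc counital comp_Id_left comp_Id_right
  consider (unary) x where "a = 1" "k = [x]" | (binary) x y where "a = 2" "k = [x, y]"
  proof -
    have "a = 1 \<or> a = 2" using assms(1,2) by (auto simp: R_DS_def coalg_rels_def)
    then show thesis using that assms(3) by (auto simp: length_Suc_conv numeral_2_eq_2)
  qed
  \<comment> \<open>Evaluating arities produces \<open>Suc 0\<close>, so \<open>1 :: nat\<close> is normalised to \<open>Suc 0\<close> throughout.\<close>
  then show ?thesis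
  proof cases
    case unary
    then show ?thesis using assms(1) assms(2)[unfolded unary(1)] unfolding R_DS_def coalg_rels_def
      by (auto simp: rel_simps[unfolded One_nat_def] One_nat_def)
  next
    case binary
    then show ?thesis using assms(1) assms(2)[unfolded binary(1)] unfolding R_DS_def coalg_rels_def
      by (auto simp: rel_simps[unfolded One_nat_def] One_nat_def)
  qed
qed

lemma push_S_typing:
  assumes "tmty tyS t = Some (a, b)" and "length k = a"
  shows "length (fst (push_S k t)) = b \<and> tmty ty0 (snd (push_S k t)) = Some (a, b)"
  using assms
proof (induction t arbitrary: a b k)
  case (Gen g)
  then show ?case
    by (cases g rule: tyS.cases; cases "case g of G0 h \<Rightarrow> h | _ \<Rightarrow> G_Eps") auto
next
  case (Comp f g)
  from Comp.prems(1) obtain c where g: "tmty tyS g = Some (a, c)" and f: "tmty tyS f = Some (c, b)"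
    by (rule tmty_CompE)
  show ?case using Comp.IH(2)[OF g Comp.prems(2)] Comp.IH(1)[OF f] by (auto simp: Let_def)
next
  case (Tens f g)
  from Tens.prems(1) obtain a1 b1 a2 b2 where f: "tmty tyS f = Some (a1, b1)"
    and g: "tmty tyS g = Some (a2, b2)" and "a = a1 + a2" "b = b1 + b2"
    by (rule tmty_TensE)
  then show ?case
    using Tens.IH(1)[OF f, of "take a1 k"] Tens.IH(2)[OF g, of "drop a1 k"] Tens.prems(2)
    by (auto simp: Let_def tm_src_eq[OF f])
qed auto

lemma length_push_S:
  "tmty tyS t = Some (a, b) \<Longrightarrow> length k = a \<Longrightarrow> length (fst (push_S k t)) = b"
  using push_S_typing by blast

lemma tmty_push_S:
  "tmty tyS t = Some (a, b) \<Longrightarrow> length k = a \<Longrightarrow> tmty ty0 (snd (push_S k t)) = Some (a, b)"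
  using push_S_typing by blast

lemma tmty_R_DS: "(x, y) \<in> R_DS \<Longrightarrow> tmty tyS x = tmty tyS y"
  by (auto simp: R_DS_def coalg_rels_def)

lemma beq_DS_tmty: "s \<approx>\<^sub>S t \<Longrightarrow> tmty tyS s = tmty tyS t"
  by (rule beq_tmty_eq) (auto dest: tmty_R_DS)

lemma length_split3:
  assumes "length k = l + m + n"
  obtains x y z where "k = x @ y @ z" "length x = l" "length y = m" "length z = n"
proof
  show "k = take l k @ take m (drop l k) @ drop (l + m) k"
    by (metis append_take_drop_id drop_drop add.commute)
qed (use assms in auto)

lemma push_S_respects_beq:
  assumes "s \<approx>\<^sub>S t" and "tmty tyS s = Some (a, b)" and "length k = a"
  shows "fst (push_S k s) = fst (push_S k t) \<and> snd (push_S k s) \<approx>\<^sub>D snd (push_S k t)"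
  using assms
proof (induction arbitrary: a b k rule: beq.induct)
  case (sym s t)
  then show ?case using beq_DS_tmty[OF sym.hyps] by (metis beq.sym)
next
  case (trans s t u)
  then show ?case using beq_DS_tmty[OF trans.hyps(1)] by (metis beq.trans)
next
  case (comp_cong s s' t t')
  from comp_cong.prems(1) obtain c
    where t: "tmty tyS t = Some (a, c)" and s: "tmty tyS s = Some (c, b)"
    by (rule tmty_CompE)
  show ?case using comp_cong.IH(2)[OF t comp_cong.prems(2)] comp_cong.IH(1)[OF s]
      push_S_typing[OF t comp_cong.prems(2)]
    by (auto simp: Let_def intro: beq.comp_cong)
next
  case (tens_cong s s' t t')
  from tens_cong.prems(1) obtain a1 b1 a2 b2 where s: "tmty tyS s = Some (a1, b1)"
    and t: "tmty tyS t = Some (a2, b2)" and "a = a1 + a2" "b = b1 + b2"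
    by (rule tmty_TensE)
  moreover have "tm_src tyS s' = a1"
    using s beq_DS_tmty[OF tens_cong.hyps(1)] by (simp add: tm_src_eq)
  ultimately show ?case
    using tens_cong.IH(1)[OF s, of "take a1 k"] tens_cong.IH(2)[OF t, of "drop a1 k"]
      tens_cong.prems(2)
    by (auto simp: Let_def tm_src_eq intro: beq.tens_cong)
next
  case (rel s t)
  then show ?case by (rule push_S_relation)
next
  case (id_l f n m)
  then show ?case using push_S_typing[OF id_l.hyps] by (auto simp: Let_def intro: beq.id_l)
next
  case (id_r f n m)
  then show ?case using push_S_typing[OF id_r.hyps] by (auto simp: Let_def intro: beq.id_r)
next
  case (assoc f c d g b' h a')
  then have "length k = a'" by auto
  with assoc.hyps show ?case
    by (simp add: Let_def) (blast intro: beq.assoc tmty_push_S length_push_S)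
next
  case (tens_assoc f g h)
  from tens_assoc.prems(1) obtain af bf ag bg ah bh where
    "tmty tyS f = Some (af, bf)" "tmty tyS g = Some (ag, bg)" and "a = af + ag + ah"
    by (auto split: option.splits prod.splits)
  moreover have "drop (af + ag) k = drop ag (drop af k)" by (simp add: add.commute)
  ultimately show ?case by (simp add: Let_def tm_src_eq min_def drop_take beq.tens_assoc)
next
  case (tens_unit_r f)
  then have "tmty tyS f = Some (a, b)" by (auto split: option.splits prod.splits)
  then show ?case using tens_unit_r.prems(2) by (simp add: Let_def tm_src_eq beq.tens_unit_r)
next
  case (tens_id m n)
  then show ?case using beq.tens_id[of ty0 R_D m n] by (simp add: Let_def)
next
  case (interchange f b' c f' a' g e l g' d)
  then have "length (take a' k) = a'" "length (drop a' k) = d" by auto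
  with interchange.hyps have "length (fst (push_S (take a' k) f')) = b'"
      "length (fst (push_S (drop a' k) g')) = e"
    by (auto intro: length_push_S)
  with interchange.hyps \<open>length (take a' k) = a'\<close> \<open>length (drop a' k) = d\<close> show ?case
    by (simp add: Let_def tm_src_eq, intro beq.interchange) (auto intro: tmty_push_S)
next
  case (br_nat f m m' g n n')
  then have "length (take m k) = m" "length (drop m k) = n" by auto
  with br_nat.hyps show ?case
    by (simp add: Let_def tm_src_eq length_push_S tmty_push_S beq.br_nat)
next
  case (hex1 l m n)
  then have "length k = l + m + n" by simp
  then obtain x y z where "k = x @ y @ z" "length x = l" "length y = m" "length z = n"
    by (rule length_split3)
  then show ?case by (simp add: Let_def beq.hex1)
next
  case (hex2 l m n)
  then have "length k = l + m + n" by simp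
  then obtain x y z where "k = x @ y @ z" "length x = l" "length y = m" "length z = n"
    by (rule length_split3)
  then show ?case by (simp add: Let_def beq.hex2)
qed (auto simp: Let_def intro: beq.intros)

abbreviation "S \<equiv> Gen G_S"
abbreviation "S_inv \<equiv> Gen G_Sinv"
abbreviation "Delta \<equiv> Gen (G0 G_Delta)"

definition S_pow :: "int \<Rightarrow> genS tm" where
  "S_pow = tm_zpow S S_inv 1"

lemma S_S_inv: "Comp S S_inv \<approx>\<^sub>S Id 1"
  by (rule beq.rel) (simp add: R_DS_def)

lemma S_inv_S: "Comp S_inv S \<approx>\<^sub>S Id 1"
  by (rule beq.rel) (simp add: R_DS_def)

lemma tmty_S_pow [simp]: "tmty tyS (S_pow a) = Some (1, 1)"
  unfolding S_pow_def by (rule tmty_tm_zpow[OF _ _ S_S_inv S_inv_S]) simp_all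

lemma S_pow_Suc: "Comp S (S_pow a) \<approx>\<^sub>S S_pow (a + 1)"
  unfolding S_pow_def by (rule tm_zpow_Suc[OF _ _ S_S_inv S_inv_S]) simp_all

lemma S_pow_pred: "Comp S_inv (S_pow a) \<approx>\<^sub>S S_pow (a - 1)"
  unfolding S_pow_def by (rule tm_zpow_pred[OF _ _ S_S_inv S_inv_S]) simp_all

lemma S_pow_0 [simp]: "S_pow 0 = Id 1"
  by (simp add: S_pow_def)

fun S_vec :: "int list \<Rightarrow> genS tm" where
  "S_vec [] = Id 0" | "S_vec (x # xs) = Tens (S_pow x) (S_vec xs)"

lemma tmty_S_vec [simp]: "tmty tyS (S_vec k) = Some (length k, length k)"
  by (induction k) auto

lemma S_vec_append: "S_vec (xs @ ys) \<approx>\<^sub>S Tens (S_vec xs) (S_vec ys)"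
proof (induction xs)
  case Nil
  then show ?case by (simp, rule beq.sym, rule beq.tens_unit_l)
next
  case (Cons x xs)
  have "S_vec ((x # xs) @ ys) \<approx>\<^sub>S Tens (S_pow x) (Tens (S_vec xs) (S_vec ys))"
    by (simp, rule tens_cong_right, rule Cons.IH)
  also have "\<dots> \<approx>\<^sub>S Tens (S_vec (x # xs)) (S_vec ys)"
    by (simp, rule beq.sym, rule beq.tens_assoc)
  finally show ?case .
qed

lemma S_vec_single: "S_vec [x] \<approx>\<^sub>S S_pow x"
  by (simp, rule beq.tens_unit_r)

lemma S_vec_pair: "S_vec [x, y] \<approx>\<^sub>S Tens (S_pow x) (S_pow y)"
  by (simp, rule tens_cong_right, rule beq.tens_unit_r)

lemma S_vec_zero: "S_vec (replicate n 0) \<approx>\<^sub>S Id n"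
proof (induction n)
  case 0 then show ?case by (simp add: beq.refl)
next
  case (Suc n)
  have "S_vec (replicate (Suc n) 0) \<approx>\<^sub>S Tens (Id 1) (Id n)"
    by (simp, rule tens_cong_right, rule Suc.IH)
  also have "\<dots> \<approx>\<^sub>S Id (Suc n)" using beq.tens_id[of tyS R_DS 1 n] by simp
  finally show ?case .
qed

lemma tmty_map_G0: "tmty tyS (map_tm G0 s) = tmty ty0 s"
  by (induction s) (auto split: option.splits prod.splits)

lemma tm_src_map_G0: "tm_src tyS (map_tm G0 s) = tm_src ty0 s"
  by (induction s) auto

lemma Gen_comp_S_pow:
  assumes "tyS g = (1, 0)" and "Comp (Gen g) S \<approx>\<^sub>S Gen g"
  shows "Comp (Gen g) (S_pow a) \<approx>\<^sub>S Gen g"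
  unfolding S_pow_def by (rule comp_tm_zpow_absorb[OF _ _ S_S_inv S_inv_S]) (simp_all add: assms)

lemma Delta_S_pow_step:
  assumes tX: "tmty tyS X = Some (1, 1)" and tB: "tmty tyS B = Some (2, 2)"
  and hX: "Comp Delta X \<approx>\<^sub>S Comp (Tens X X) (Comp B Delta)"
  and hS: "Comp X (S_pow a) \<approx>\<^sub>S S_pow a'" and hB: "Comp B (braid_pow a) \<approx>\<^sub>S braid_pow a'"
  and hN: "Comp B (Tens (S_pow a) (S_pow a)) \<approx>\<^sub>S Comp (Tens (S_pow a) (S_pow a)) B"
  and IH: "Comp Delta (S_pow a) \<approx>\<^sub>S Comp (Tens (S_pow a) (S_pow a)) (Comp (braid_pow a) Delta)"
  shows "Comp Delta (S_pow a') \<approx>\<^sub>S Comp (Tens (S_pow a') (S_pow a')) (Comp (braid_pow a') Delta)"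
proof -
  let ?Sa = "S_pow a"
  have "Comp Delta (S_pow a') \<approx>\<^sub>S Comp Delta (Comp X ?Sa)"
    by (rule comp_cong_right, rule beq.sym, rule hS)
  also have "\<dots> \<approx>\<^sub>S Comp (Comp Delta X) ?Sa"
    by (rule beq.sym, rule comp_assoc) (simp add: tX)
  also have "\<dots> \<approx>\<^sub>S Comp (Comp (Tens X X) (Comp B Delta)) ?Sa"
    by (rule comp_cong_left, rule hX)
  also have "\<dots> \<approx>\<^sub>S Comp (Tens X X) (Comp (Comp B Delta) ?Sa)"
    by (rule comp_assoc) (simp add: tX tB)
  also have "\<dots> \<approx>\<^sub>S Comp (Tens X X) (Comp B (Comp Delta ?Sa))"
    by (rule comp_cong_right, rule comp_assoc) (simp add: tB)
  also have "\<dots> \<approx>\<^sub>S Comp (Tens X X) (Comp B (Comp (Tens ?Sa ?Sa) (Comp (braid_pow a) Delta)))"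
    by (rule comp_cong_right, rule comp_cong_right, rule IH)
  also have "\<dots> \<approx>\<^sub>S Comp (Tens X X) (Comp (Comp B (Tens ?Sa ?Sa)) (Comp (braid_pow a) Delta))"
    by (rule comp_cong_right, rule beq.sym, rule comp_assoc) (simp add: tB)
  also have "\<dots> \<approx>\<^sub>S Comp (Tens X X) (Comp (Comp (Tens ?Sa ?Sa) B) (Comp (braid_pow a) Delta))"
    by (rule comp_cong_right, rule comp_cong_left, rule hN)
  also have "\<dots> \<approx>\<^sub>S Comp (Tens X X) (Comp (Tens ?Sa ?Sa) (Comp B (Comp (braid_pow a) Delta)))"
    by (rule comp_cong_right, rule comp_assoc) (simp add: tB)
  also have "\<dots> \<approx>\<^sub>S Comp (Comp (Tens X X) (Tens ?Sa ?Sa)) (Comp B (Comp (braid_pow a) Delta))"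
    by (rule beq.sym, rule comp_assoc) (simp add: tB tX)
  also have "\<dots> \<approx>\<^sub>S Comp (Tens (Comp X ?Sa) (Comp X ?Sa)) (Comp B (Comp (braid_pow a) Delta))"
    by (rule comp_cong_left, rule tens_comp_interchange) (simp add: tX)
  also have "\<dots> \<approx>\<^sub>S Comp (Tens (S_pow a') (S_pow a')) (Comp B (Comp (braid_pow a) Delta))"
    by (rule comp_cong_left, rule beq.tens_cong, rule hS, rule hS)
  also have "\<dots> \<approx>\<^sub>S Comp (Tens (S_pow a') (S_pow a')) (Comp (Comp B (braid_pow a)) Delta)"
    by (rule comp_cong_right, rule beq.sym, rule comp_assoc) (simp add: tB)
  also have "\<dots> \<approx>\<^sub>S Comp (Tens (S_pow a') (S_pow a')) (Comp (braid_pow a') Delta)"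
    by (rule comp_cong_right, rule comp_cong_left, rule hB)
  finally show ?thesis .
qed

lemma Delta_S: "Comp Delta S \<approx>\<^sub>S Comp (Tens S S) (Comp (Br 1 1) Delta)"
  by (rule beq.rel) (simp add: R_DS_def)

lemma Delta_S_braid_first: "Comp Delta S \<approx>\<^sub>S Comp (Br 1 1) (Comp (Tens S S) Delta)"
proof -
  have "Comp Delta S \<approx>\<^sub>S Comp (Tens S S) (Comp (Br 1 1) Delta)" by (rule Delta_S)
  also have "\<dots> \<approx>\<^sub>S Comp (Comp (Tens S S) (Br 1 1)) Delta"
    by (rule beq.sym, rule comp_assoc) simp
  also have "\<dots> \<approx>\<^sub>S Comp (Comp (Br 1 1) (Tens S S)) Delta"
    by (rule comp_cong_left, rule beq.sym, rule beq.br_nat) simp_all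
  also have "\<dots> \<approx>\<^sub>S Comp (Br 1 1) (Comp (Tens S S) Delta)"
    by (rule comp_assoc) simp
  finally show ?thesis .
qed

lemma Delta_S_inv: "Comp Delta S_inv \<approx>\<^sub>S Comp (Tens S_inv S_inv) (Comp (BrInv 1 1) Delta)"
proof -
  have inv_Delta_S: "Comp (BrInv 1 1) (Comp Delta S) \<approx>\<^sub>S Comp (Tens S S) Delta"
  proof -
    have "Comp (BrInv 1 1) (Comp Delta S)
        \<approx>\<^sub>S Comp (BrInv 1 1) (Comp (Br 1 1) (Comp (Tens S S) Delta))"
      by (rule comp_cong_right, rule Delta_S_braid_first)
    also have "\<dots> \<approx>\<^sub>S Comp (Comp (BrInv 1 1) (Br 1 1)) (Comp (Tens S S) Delta)"
      by (rule beq.sym, rule comp_assoc) simp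
    also have "\<dots> \<approx>\<^sub>S Comp (Id 2) (Comp (Tens S S) Delta)"
      by (rule comp_cong_left, rule BrInv_Br_1_1)
    also have "\<dots> \<approx>\<^sub>S Comp (Tens S S) Delta" by (rule comp_Id_left) simp
    finally show ?thesis .
  qed
  have inv_Delta: "Comp (BrInv 1 1) Delta \<approx>\<^sub>S Comp (Tens S S) (Comp Delta S_inv)"
  proof -
    have "Comp (BrInv 1 1) Delta \<approx>\<^sub>S Comp (BrInv 1 1) (Comp Delta (Id 1))"
      by (rule comp_cong_right, rule beq.sym, rule comp_Id_right) simp
    also have "\<dots> \<approx>\<^sub>S Comp (BrInv 1 1) (Comp Delta (Comp S S_inv))"
      by (rule comp_cong_right, rule comp_cong_right, rule beq.sym, rule S_S_inv)
    also have "\<dots> \<approx>\<^sub>S Comp (BrInv 1 1) (Comp (Comp Delta S) S_inv)"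
      by (rule comp_cong_right, rule beq.sym, rule comp_assoc) simp
    also have "\<dots> \<approx>\<^sub>S Comp (Comp (BrInv 1 1) (Comp Delta S)) S_inv"
      by (rule beq.sym, rule comp_assoc) simp
    also have "\<dots> \<approx>\<^sub>S Comp (Comp (Tens S S) Delta) S_inv"
      by (rule comp_cong_left, rule inv_Delta_S)
    also have "\<dots> \<approx>\<^sub>S Comp (Tens S S) (Comp Delta S_inv)"
      by (rule comp_assoc) simp
    finally show ?thesis .
  qed
  have "Comp (Tens S_inv S_inv) (Comp (BrInv 1 1) Delta)
      \<approx>\<^sub>S Comp (Tens S_inv S_inv) (Comp (Tens S S) (Comp Delta S_inv))"
    by (rule comp_cong_right, rule inv_Delta)
  also have "\<dots> \<approx>\<^sub>S Comp (Comp (Tens S_inv S_inv) (Tens S S)) (Comp Delta S_inv)"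
    by (rule beq.sym, rule comp_assoc) simp
  also have "\<dots> \<approx>\<^sub>S Comp (Tens (Comp S_inv S) (Comp S_inv S)) (Comp Delta S_inv)"
    by (rule comp_cong_left, rule tens_comp_interchange) simp
  also have "\<dots> \<approx>\<^sub>S Comp (Tens (Id 1) (Id 1)) (Comp Delta S_inv)"
    by (rule comp_cong_left, rule beq.tens_cong, rule S_inv_S, rule S_inv_S)
  also have "\<dots> \<approx>\<^sub>S Comp (Id 2) (Comp Delta S_inv)"
    by (rule comp_cong_left, rule tens_Id_1_1)
  also have "\<dots> \<approx>\<^sub>S Comp Delta S_inv" by (rule comp_Id_left) simp
  finally show ?thesis by (rule beq.sym)
qed

lemma Delta_S_pow:
  "Comp Delta (S_pow a) \<approx>\<^sub>S Comp (Tens (S_pow a) (S_pow a)) (Comp (braid_pow a) Delta)"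
proof (induction a rule: int_induct[where k = 0])
  case base
  have "Comp Delta (S_pow 0) \<approx>\<^sub>S Delta" by (simp, rule comp_Id_right) simp
  also have "\<dots> \<approx>\<^sub>S Comp (Id 2) (Comp (Id 2) Delta)"
    by (rule beq.sym, rule beq.trans, rule comp_Id_left, simp, rule comp_Id_left) simp
  also have "\<dots> \<approx>\<^sub>S Comp (Tens (Id 1) (Id 1)) (Comp (Id 2) Delta)"
    by (rule comp_cong_left, rule beq.sym, rule tens_Id_1_1)
  finally show ?case by (simp add: braid_pow_def)
next
  case (step1 i)
  show ?case
  proof (rule Delta_S_pow_step[OF _ _ Delta_S S_pow_Suc braid_pow_Suc _ step1.IH])
    show "Comp (Br 1 1) (Tens (S_pow i) (S_pow i)) \<approx>\<^sub>S Comp (Tens (S_pow i) (S_pow i)) (Br 1 1)"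
      by (rule beq.br_nat) simp_all
  qed simp_all
next
  case (step2 i)
  show ?case
  proof (rule Delta_S_pow_step[OF _ _ Delta_S_inv S_pow_pred braid_pow_pred _ step2.IH])
    show "Comp (BrInv 1 1) (Tens (S_pow i) (S_pow i))
        \<approx>\<^sub>S Comp (Tens (S_pow i) (S_pow i)) (BrInv 1 1)"
      using brinv_nat[where f="S_pow i" and g="S_pow i" and m=1 and m'=1 and n=1 and n'=1] by simp
  qed simp_all
qed

abbreviation "Omega_p \<equiv> Gen (G0 G_OmP)"
abbreviation "Omega_m \<equiv> Gen (G0 G_OmM)"
abbreviation "Omega \<equiv> omega_pow (G0 G_OmP) (G0 G_OmM)"

fun on_strand :: "bool \<Rightarrow> genS tm \<Rightarrow> genS tm" where
  "on_strand True x = Tens x (Id 1)" | "on_strand False x = Tens (Id 1) x"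

lemma tmty_on_strand [simp]:
  "tmty tyS x = Some (1, 1) \<Longrightarrow> tmty tyS (on_strand s x) = Some (2, 2)"
  by (cases s) auto

lemma on_strand_cong: "x \<approx>\<^sub>S y \<Longrightarrow> on_strand s x \<approx>\<^sub>S on_strand s y"
  by (cases s) (auto intro: tens_cong_left tens_cong_right)

lemma on_strand_comp:
  assumes "tmty tyS x = Some (1, 1)" "tmty tyS y = Some (1, 1)"
  shows "Comp (on_strand s x) (on_strand s y) \<approx>\<^sub>S on_strand s (Comp x y)"
proof (cases s)
  case True
  have "Comp (Tens x (Id 1)) (Tens y (Id 1)) \<approx>\<^sub>S Tens (Comp x y) (Comp (Id 1) (Id 1))"
    by (rule tens_comp_interchange) (simp add: assms)
  also have "\<dots> \<approx>\<^sub>S Tens (Comp x y) (Id 1)"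
    by (rule tens_cong_right, rule comp_Id_left) simp
  finally show ?thesis using True by simp
next
  case False
  have "Comp (Tens (Id 1) x) (Tens (Id 1) y) \<approx>\<^sub>S Tens (Comp (Id 1) (Id 1)) (Comp x y)"
    by (rule tens_comp_interchange) (simp add: assms)
  also have "\<dots> \<approx>\<^sub>S Tens (Id 1) (Comp x y)"
    by (rule tens_cong_left, rule comp_Id_left) simp
  finally show ?thesis using False by simp
qed

lemma on_strand_Id: "on_strand s (Id 1) = Tens (Id 1) (Id 1)"
  by (cases s) auto

lemma Omega_p_S: "Comp Omega_p (on_strand s S) \<approx>\<^sub>S Omega_m"
  by (cases s; simp; rule beq.rel; simp add: R_DS_def)

lemma Omega_p_S_inv: "Comp Omega_p (Tens S_inv (Id 1)) \<approx>\<^sub>S Comp Omega_m (Br 1 1)"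
  by (rule beq.rel) (simp add: R_DS_def)

lemma Omega_m_S_tens: "Comp Omega_m (on_strand s S) \<approx>\<^sub>S Comp Omega_p (Tens S S)"
proof -
  have "Comp Omega_m (on_strand s S) \<approx>\<^sub>S Comp (Comp Omega_p (on_strand (\<not>s) S)) (on_strand s S)"
    by (rule comp_cong_left, rule beq.sym, rule Omega_p_S)
  also have "\<dots> \<approx>\<^sub>S Comp Omega_p (Comp (on_strand (\<not>s) S) (on_strand s S))"
    by (rule comp_assoc) (cases s; simp)
  also have "\<dots> \<approx>\<^sub>S Comp Omega_p (Tens S S)"
  proof (rule comp_cong_right, cases s)
    case True
    have "Comp (Tens (Id 1) S) (Tens S (Id 1)) \<approx>\<^sub>S Tens (Comp (Id 1) S) (Comp S (Id 1))"
      by (rule tens_comp_interchange) simp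
    also have "\<dots> \<approx>\<^sub>S Tens S S"
      by (rule beq.tens_cong, rule comp_Id_left, simp, rule comp_Id_right) simp
    finally show "Comp (on_strand (\<not>s) S) (on_strand s S) \<approx>\<^sub>S Tens S S"
      using True by simp
  next
    case False
    have "Comp (Tens S (Id 1)) (Tens (Id 1) S) \<approx>\<^sub>S Tens (Comp S (Id 1)) (Comp (Id 1) S)"
      by (rule tens_comp_interchange) simp
    also have "\<dots> \<approx>\<^sub>S Tens S S"
      by (rule beq.tens_cong, rule comp_Id_right, simp, rule comp_Id_left) simp
    finally show "Comp (on_strand (\<not>s) S) (on_strand s S) \<approx>\<^sub>S Tens S S"
      using False by simp
  qed
  finally show ?thesis .
qed

lemma Omega_p_braided: "Omega_p \<approx>\<^sub>S Comp (Comp Omega_p (Tens S S)) (Br 1 1)"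
proof -
  have "Omega_p \<approx>\<^sub>S Comp Omega_p (Id 2)" by (rule beq.sym, rule comp_Id_right) simp
  also have "\<dots> \<approx>\<^sub>S Comp Omega_p (Tens (Id 1) (Id 1))"
    by (rule comp_cong_right, rule beq.sym, rule tens_Id_1_1)
  also have "\<dots> \<approx>\<^sub>S Comp Omega_p (Tens (Comp S_inv S) (Comp (Id 1) (Id 1)))"
    by (rule comp_cong_right, rule beq.tens_cong, rule beq.sym, rule S_inv_S,
        rule beq.sym, rule comp_Id_left) simp
  also have "\<dots> \<approx>\<^sub>S Comp Omega_p (Comp (Tens S_inv (Id 1)) (Tens S (Id 1)))"
    by (rule comp_cong_right, rule beq.sym, rule tens_comp_interchange) simp
  also have "\<dots> \<approx>\<^sub>S Comp (Comp Omega_p (Tens S_inv (Id 1))) (Tens S (Id 1))"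
    by (rule beq.sym, rule comp_assoc) simp
  also have "\<dots> \<approx>\<^sub>S Comp (Comp Omega_m (Br 1 1)) (Tens S (Id 1))"
    by (rule comp_cong_left, rule Omega_p_S_inv)
  also have "\<dots> \<approx>\<^sub>S Comp Omega_m (Comp (Br 1 1) (Tens S (Id 1)))"
    by (rule comp_assoc) simp
  also have "\<dots> \<approx>\<^sub>S Comp Omega_m (Comp (Tens (Id 1) S) (Br 1 1))"
    by (rule comp_cong_right, rule beq.br_nat) simp_all
  also have "\<dots> \<approx>\<^sub>S Comp (Comp Omega_m (Tens (Id 1) S)) (Br 1 1)"
    by (rule beq.sym, rule comp_assoc) simp
  also have "\<dots> \<approx>\<^sub>S Comp (Comp Omega_p (Tens S S)) (Br 1 1)"
    by (rule comp_cong_left) (use Omega_m_S_tens[of False] in simp)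
  finally show ?thesis .
qed

lemma Omega_m_S: "Comp Omega_m (on_strand s S) \<approx>\<^sub>S Comp Omega_p (BrInv 1 1)"
proof -
  let ?W = "Comp Omega_p (Tens S S)"
  have "Comp Omega_p (BrInv 1 1) \<approx>\<^sub>S Comp (Comp ?W (Br 1 1)) (BrInv 1 1)"
    by (rule comp_cong_left, rule Omega_p_braided)
  also have "\<dots> \<approx>\<^sub>S Comp ?W (Comp (Br 1 1) (BrInv 1 1))"
    by (rule comp_assoc) simp
  also have "\<dots> \<approx>\<^sub>S Comp ?W (Id 2)" by (rule comp_cong_right, rule Br_BrInv_1_1)
  also have "\<dots> \<approx>\<^sub>S ?W" by (rule comp_Id_right) simp
  finally show ?thesis using Omega_m_S_tens by (meson beq.sym beq.trans)
qed

lemma braid_pow_on_strand: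
  "Comp (braid_pow p) (on_strand s S)
    \<approx>\<^sub>S Comp (on_strand (if even p then s else \<not> s) S) (braid_pow p)"
  using braid_pow_nat[where ty=tyS and R=R_DS and f=S and g="Id 1" and a=p]
    braid_pow_nat[where ty=tyS and R=R_DS and f="Id 1" and g=S and a=p]
  by (cases s) auto

lemma Omega_S: "Comp (Omega j) (on_strand s S) \<approx>\<^sub>S Omega (j + 1)"
proof -
  define p where "p = - (j div 2)"
  define s' where "s' = (if even p then s else \<not> s)"
  let ?b = "Gen (if even j then G0 G_OmP else G0 G_OmM)"
  have "Comp (Omega j) (on_strand s S) = Comp (Comp ?b (braid_pow p)) (on_strand s S)"
    by (simp add: omega_pow_def p_def)
  also have "\<dots> \<approx>\<^sub>S Comp ?b (Comp (braid_pow p) (on_strand s S))"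
    by (rule comp_assoc) (cases s; simp)
  also have "\<dots> \<approx>\<^sub>S Comp ?b (Comp (on_strand s' S) (braid_pow p))"
    by (rule comp_cong_right) (simp add: s'_def braid_pow_on_strand)
  also have "\<dots> \<approx>\<^sub>S Comp (Comp ?b (on_strand s' S)) (braid_pow p)"
    by (rule beq.sym, rule comp_assoc) (cases s'; simp)
  also have "\<dots> \<approx>\<^sub>S Omega (j + 1)"
  proof (cases "even j")
    case True
    then have "(j + 1) div 2 = j div 2" "odd (j + 1)" by presburger+
    then have Omega_Suc: "Omega (j + 1) = Comp Omega_m (braid_pow p)"
      by (simp add: omega_pow_def p_def)
    have gen: "(if even j then G0 G_OmP else G0 G_OmM) = G0 G_OmP" using True by simp
    show ?thesis unfolding Omega_Suc gen by (rule comp_cong_left, rule Omega_p_S)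
  next
    case False
    then have "(j + 1) div 2 = j div 2 + 1" "even (j + 1)" by presburger+
    then have Omega_Suc: "Omega (j + 1) = Comp Omega_p (braid_pow (p - 1))"
      by (simp add: omega_pow_def p_def)
    have "Comp (Comp Omega_m (on_strand s' S)) (braid_pow p)
        \<approx>\<^sub>S Comp (Comp Omega_p (BrInv 1 1)) (braid_pow p)"
      by (rule comp_cong_left, rule Omega_m_S)
    also have "\<dots> \<approx>\<^sub>S Comp Omega_p (Comp (BrInv 1 1) (braid_pow p))"
      by (rule comp_assoc) simp
    also have "\<dots> \<approx>\<^sub>S Comp Omega_p (braid_pow (p - 1))"
      by (rule comp_cong_right, rule braid_pow_pred)
    finally have
      "Comp (Comp Omega_m (on_strand s' S)) (braid_pow p) \<approx>\<^sub>S Comp Omega_p (braid_pow (p - 1))" .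
    moreover have "(if even j then G0 G_OmP else G0 G_OmM) = G0 G_OmM" using False by simp
    ultimately show ?thesis unfolding Omega_Suc by simp
  qed
  finally show ?thesis .
qed

lemma Omega_S_inv: "Comp (Omega j) (on_strand s S_inv) \<approx>\<^sub>S Omega (j - 1)"
proof -
  have "Comp (Omega j) (on_strand s S_inv)
      \<approx>\<^sub>S Comp (Comp (Omega (j - 1)) (on_strand s S)) (on_strand s S_inv)"
    by (rule comp_cong_left, rule beq.sym) (use Omega_S[of "j - 1" s] in simp)
  also have "\<dots> \<approx>\<^sub>S Comp (Omega (j - 1)) (Comp (on_strand s S) (on_strand s S_inv))"
    by (rule comp_assoc) (cases s; simp)
  also have "\<dots> \<approx>\<^sub>S Comp (Omega (j - 1)) (on_strand s (Comp S S_inv))"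
    by (rule comp_cong_right, rule on_strand_comp) simp_all
  also have "\<dots> \<approx>\<^sub>S Comp (Omega (j - 1)) (on_strand s (Id 1))"
    by (rule comp_cong_right, rule on_strand_cong, rule S_S_inv)
  also have "\<dots> \<approx>\<^sub>S Omega (j - 1)"
    unfolding on_strand_Id by (rule comp_tens_Id_1_1) simp
  finally show ?thesis .
qed

lemma Omega_S_pow: "Comp (Omega j) (on_strand s (S_pow a)) \<approx>\<^sub>S Omega (j + a)"
proof (induction a arbitrary: j rule: int_induct[where k = 0])
  case base
  show ?case unfolding S_pow_0 on_strand_Id add_0_right by (rule comp_tens_Id_1_1) simp
next
  case (step1 i)
  have "Comp (Omega j) (on_strand s (S_pow (i + 1)))
      \<approx>\<^sub>S Comp (Omega j) (on_strand s (Comp S (S_pow i)))"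
    by (rule comp_cong_right, rule on_strand_cong, rule beq.sym, rule S_pow_Suc)
  also have "\<dots> \<approx>\<^sub>S Comp (Omega j) (Comp (on_strand s S) (on_strand s (S_pow i)))"
    by (rule comp_cong_right, rule beq.sym, rule on_strand_comp) simp_all
  also have "\<dots> \<approx>\<^sub>S Comp (Comp (Omega j) (on_strand s S)) (on_strand s (S_pow i))"
    by (rule beq.sym, rule comp_assoc) (cases s; simp)
  also have "\<dots> \<approx>\<^sub>S Comp (Omega (j + 1)) (on_strand s (S_pow i))"
    by (rule comp_cong_left, rule Omega_S)
  also have "\<dots> \<approx>\<^sub>S Omega (j + 1 + i)" by (rule step1.IH)
  finally show ?case by (simp add: algebra_simps)
next
  case (step2 i)
  have "Comp (Omega j) (on_strand s (S_pow (i - 1)))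
      \<approx>\<^sub>S Comp (Omega j) (on_strand s (Comp S_inv (S_pow i)))"
    by (rule comp_cong_right, rule on_strand_cong, rule beq.sym, rule S_pow_pred)
  also have "\<dots> \<approx>\<^sub>S Comp (Omega j) (Comp (on_strand s S_inv) (on_strand s (S_pow i)))"
    by (rule comp_cong_right, rule beq.sym, rule on_strand_comp) simp_all
  also have "\<dots> \<approx>\<^sub>S Comp (Comp (Omega j) (on_strand s S_inv)) (on_strand s (S_pow i))"
    by (rule beq.sym, rule comp_assoc) (cases s; simp)
  also have "\<dots> \<approx>\<^sub>S Comp (Omega (j - 1)) (on_strand s (S_pow i))"
    by (rule comp_cong_left, rule Omega_S_inv)
  also have "\<dots> \<approx>\<^sub>S Omega (j - 1 + i)" by (rule step2.IH)
  finally show ?case by (simp add: algebra_simps)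
qed

lemma Omega_tens_S_pow: "Comp (Omega j) (Tens (S_pow x) (S_pow y)) \<approx>\<^sub>S Omega (j + x + y)"
proof -
  have "Comp (Omega j) (Tens (S_pow x) (S_pow y))
      \<approx>\<^sub>S Comp (Omega j) (Tens (Comp (S_pow x) (Id 1)) (Comp (Id 1) (S_pow y)))"
    by (rule comp_cong_right, rule beq.tens_cong, rule beq.sym, rule comp_Id_right, simp,
        rule beq.sym, rule comp_Id_left) simp
  also have "\<dots> \<approx>\<^sub>S Comp (Omega j) (Comp (on_strand True (S_pow x)) (on_strand False (S_pow y)))"
    by (rule comp_cong_right, rule beq.sym, simp, rule tens_comp_interchange) simp
  also have "\<dots> \<approx>\<^sub>S Comp (Comp (Omega j) (on_strand True (S_pow x))) (on_strand False (S_pow y))"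
    by (rule beq.sym, rule comp_assoc) simp
  also have "\<dots> \<approx>\<^sub>S Comp (Omega (j + x)) (on_strand False (S_pow y))"
    by (rule comp_cong_left, rule Omega_S_pow)
  also have "\<dots> \<approx>\<^sub>S Omega (j + x + y)" by (rule Omega_S_pow)
  finally show ?thesis .
qed

lemma push_gen_sound_unary:
  assumes "fst (tyS g) = 1"
  shows "Comp (Gen g) (S_pow x)
    \<approx>\<^sub>S Comp (S_vec (fst (push_gen [x] g))) (map_tm G0 (snd (push_gen [x] g)))"
proof -
  have S_pow_S_vec: "S_pow y \<approx>\<^sub>S Comp (S_vec [y]) (Id 1)" for y
  proof -
    have "S_pow y \<approx>\<^sub>S S_vec [y]" by (rule beq.sym, rule S_vec_single)
    also have "\<dots> \<approx>\<^sub>S Comp (S_vec [y]) (Id 1)"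
      by (rule beq.sym, rule comp_Id_right) simp
    finally show ?thesis .
  qed
  have counit_like: "Comp (Gen (G0 h)) (S_pow x) \<approx>\<^sub>S Comp (S_vec []) (Gen (G0 h))"
    if "h \<in> {G_Eps, G_ThP, G_ThM}" for h
  proof -
    have "Comp (Gen (G0 h)) (S_pow x) \<approx>\<^sub>S Gen (G0 h)"
      by (rule Gen_comp_S_pow) (use that in \<open>auto simp: R_DS_def intro: beq.rel\<close>)
    also have "\<dots> \<approx>\<^sub>S Comp (S_vec []) (Gen (G0 h))"
      unfolding S_vec.simps by (rule beq.sym, rule comp_Id_left) (use that in auto)
    finally show ?thesis .
  qed
  have "Comp Delta (S_pow x) \<approx>\<^sub>S Comp (S_vec [x, x]) (Comp (braid_pow x) Delta)"
    using Delta_S_pow by (rule beq.trans) (rule comp_cong_left, rule beq.sym, rule S_vec_pair)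
  then show ?thesis
    using assms beq.trans[OF S_pow_Suc S_pow_S_vec] beq.trans[OF S_pow_pred S_pow_S_vec] counit_like
    by (cases g rule: tyS.cases; cases "case g of G0 h \<Rightarrow> h | _ \<Rightarrow> G_Eps") auto
qed

lemma push_gen_sound_binary:
  assumes "fst (tyS g) = 2"
  shows "Comp (Gen g) (Tens (S_pow x) (S_pow y))
    \<approx>\<^sub>S Comp (S_vec (fst (push_gen [x, y] g))) (map_tm G0 (snd (push_gen [x, y] g)))"
proof -
  have "Comp (Gen (if even j then G0 G_OmP else G0 G_OmM)) (Tens (S_pow x) (S_pow y))
      \<approx>\<^sub>S Comp (S_vec []) (Omega (j + x + y))" if "j = 0 \<or> j = 1" for j
  proof -
    have "Gen (if even j then G0 G_OmP else G0 G_OmM) \<approx>\<^sub>S Omega j"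
      using that by (auto simp: omega_pow_def braid_pow_def intro!: beq.sym[OF comp_Id_right])
    then have "Comp (Gen (if even j then G0 G_OmP else G0 G_OmM)) (Tens (S_pow x) (S_pow y))
        \<approx>\<^sub>S Comp (Omega j) (Tens (S_pow x) (S_pow y))"
      by (rule comp_cong_left)
    also have "\<dots> \<approx>\<^sub>S Omega (j + x + y)" by (rule Omega_tens_S_pow)
    also have "\<dots> \<approx>\<^sub>S Comp (S_vec []) (Omega (j + x + y))"
      unfolding S_vec.simps by (rule beq.sym, rule comp_Id_left) simp
    finally show ?thesis .
  qed
  from this[of 0] this[of 1] assms show ?thesis
    by (cases g rule: tyS.cases; cases "case g of G0 h \<Rightarrow> h | _ \<Rightarrow> G_Eps")
      (auto simp: add.commute add.left_commute)
qed

lemma push_gen_sound: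
  assumes "tyS g = (a, b)" and "length v = a"
  shows "Comp (Gen g) (S_vec v)
    \<approx>\<^sub>S Comp (S_vec (fst (push_gen v g))) (map_tm G0 (snd (push_gen v g)))"
proof -
  have "a = 1 \<or> a = 2"
    using assms(1) by (cases g rule: tyS.cases; cases "case g of G0 h \<Rightarrow> h") auto
  then show ?thesis
  proof
    assume "a = 1"
    then obtain x where "v = [x]" using assms(2) by (auto simp: length_Suc_conv)
    have "Comp (Gen g) (S_vec [x]) \<approx>\<^sub>S Comp (Gen g) (S_pow x)"
      by (rule comp_cong_right, rule S_vec_single)
    also have "\<dots> \<approx>\<^sub>S Comp (S_vec (fst (push_gen [x] g))) (map_tm G0 (snd (push_gen [x] g)))"
      by (rule push_gen_sound_unary) (use assms(1) \<open>a = 1\<close> in simp)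
    finally show ?thesis using \<open>v = [x]\<close> by simp
  next
    assume "a = 2"
    then obtain x y where "v = [x, y]" using assms(2) by (auto simp: length_Suc_conv numeral_2_eq_2)
    have "Comp (Gen g) (S_vec [x, y]) \<approx>\<^sub>S Comp (Gen g) (Tens (S_pow x) (S_pow y))"
      by (rule comp_cong_right, rule S_vec_pair)
    also have "\<dots> \<approx>\<^sub>S Comp (S_vec (fst (push_gen [x, y] g))) (map_tm G0 (snd (push_gen [x, y] g)))"
      by (rule push_gen_sound_binary) (use assms(1) \<open>a = 2\<close> in simp)
    finally show ?thesis using \<open>v = [x, y]\<close> by simp
  qed
qed

lemma S_vec_square_Comp:
  assumes "tmty tyS f = Some (c, b)" "tmty tyS g = Some (a, c)"
    and "tmty tyS F = Some (c, b)" "tmty tyS G = Some (a, c)"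
    and "length v = a" "length w = c" "length u = b"
    and g: "Comp g (S_vec v) \<approx>\<^sub>S Comp (S_vec w) G" and f: "Comp f (S_vec w) \<approx>\<^sub>S Comp (S_vec u) F"
  shows "Comp (Comp f g) (S_vec v) \<approx>\<^sub>S Comp (S_vec u) (Comp F G)"
proof -
  have "Comp (Comp f g) (S_vec v) \<approx>\<^sub>S Comp f (Comp g (S_vec v))"
    by (rule comp_assoc) (simp add: assms)
  also have "\<dots> \<approx>\<^sub>S Comp f (Comp (S_vec w) G)" by (rule comp_cong_right, rule g)
  also have "\<dots> \<approx>\<^sub>S Comp (Comp f (S_vec w)) G"
    by (rule beq.sym, rule comp_assoc) (simp add: assms)
  also have "\<dots> \<approx>\<^sub>S Comp (Comp (S_vec u) F) G" by (rule comp_cong_left, rule f)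
  also have "\<dots> \<approx>\<^sub>S Comp (S_vec u) (Comp F G)"
    by (rule comp_assoc) (simp add: assms)
  finally show ?thesis .
qed

lemma S_vec_square_Tens:
  assumes "tmty tyS f = Some (a1, b1)" "tmty tyS g = Some (a2, b2)"
    and "tmty tyS F = Some (a1, b1)" "tmty tyS G = Some (a2, b2)"
    and "length v1 = a1" "length v2 = a2" "length w1 = b1" "length w2 = b2"
    and f: "Comp f (S_vec v1) \<approx>\<^sub>S Comp (S_vec w1) F"
    and g: "Comp g (S_vec v2) \<approx>\<^sub>S Comp (S_vec w2) G"
  shows "Comp (Tens f g) (S_vec (v1 @ v2)) \<approx>\<^sub>S Comp (S_vec (w1 @ w2)) (Tens F G)"
proof -
  have "Comp (Tens f g) (S_vec (v1 @ v2)) \<approx>\<^sub>S Comp (Tens f g) (Tens (S_vec v1) (S_vec v2))"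
    by (rule comp_cong_right, rule S_vec_append)
  also have "\<dots> \<approx>\<^sub>S Tens (Comp f (S_vec v1)) (Comp g (S_vec v2))"
    by (rule tens_comp_interchange) (simp add: assms)
  also have "\<dots> \<approx>\<^sub>S Tens (Comp (S_vec w1) F) (Comp (S_vec w2) G)"
    by (rule beq.tens_cong, rule f, rule g)
  also have "\<dots> \<approx>\<^sub>S Comp (Tens (S_vec w1) (S_vec w2)) (Tens F G)"
    by (rule beq.sym, rule tens_comp_interchange) (simp add: assms)
  also have "\<dots> \<approx>\<^sub>S Comp (S_vec (w1 @ w2)) (Tens F G)"
    by (rule comp_cong_left, rule beq.sym, rule S_vec_append)
  finally show ?thesis .
qed

lemma Br_S_vec:
  assumes "length x = m" "length y = n"
  shows "Comp (Br m n) (S_vec (x @ y)) \<approx>\<^sub>S Comp (S_vec (y @ x)) (Br m n)"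
proof -
  have "Comp (Br m n) (S_vec (x @ y)) \<approx>\<^sub>S Comp (Br m n) (Tens (S_vec x) (S_vec y))"
    by (rule comp_cong_right, rule S_vec_append)
  also have "\<dots> \<approx>\<^sub>S Comp (Tens (S_vec y) (S_vec x)) (Br m n)"
    by (rule beq.br_nat) (simp_all add: assms)
  also have "\<dots> \<approx>\<^sub>S Comp (S_vec (y @ x)) (Br m n)"
    by (rule comp_cong_left, rule beq.sym, rule S_vec_append)
  finally show ?thesis .
qed

lemma BrInv_S_vec:
  assumes "length x = m" "length y = n"
  shows "Comp (BrInv m n) (S_vec (y @ x)) \<approx>\<^sub>S Comp (S_vec (x @ y)) (BrInv m n)"
proof -
  have "Comp (BrInv m n) (S_vec (y @ x)) \<approx>\<^sub>S Comp (BrInv m n) (Tens (S_vec y) (S_vec x))"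
    by (rule comp_cong_right, rule S_vec_append)
  also have "\<dots> \<approx>\<^sub>S Comp (Tens (S_vec x) (S_vec y)) (BrInv m n)"
    by (rule brinv_nat) (simp_all add: assms)
  also have "\<dots> \<approx>\<^sub>S Comp (S_vec (x @ y)) (BrInv m n)"
    by (rule comp_cong_left, rule beq.sym, rule S_vec_append)
  finally show ?thesis .
qed

lemma push_S_sound:
  assumes "tmty tyS t = Some (a, b)" and "length v = a"
  shows "Comp t (S_vec v) \<approx>\<^sub>S Comp (S_vec (fst (push_S v t))) (map_tm G0 (snd (push_S v t)))"
  using assms
proof (induction t arbitrary: a b v)
  case (Gen g)
  then show ?case using push_gen_sound[of g a b v] by simp
next
  case (Id n)
  then have "Comp (Id n) (S_vec v) \<approx>\<^sub>S S_vec v" by (intro comp_Id_left) simp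
  also have "S_vec v \<approx>\<^sub>S Comp (S_vec v) (Id n)"
    by (rule beq.sym, rule comp_Id_right) (use Id in simp)
  finally show ?case by simp
next
  case (Comp f g)
  from Comp.prems(1) obtain c where g: "tmty tyS g = Some (a, c)" and f: "tmty tyS f = Some (c, b)"
    by (rule tmty_CompE)
  let ?w = "fst (push_S v g)"
  have w: "length ?w = c" using length_push_S[OF g Comp.prems(2)] .
  have "Comp (Comp f g) (S_vec v) \<approx>\<^sub>S Comp (S_vec (fst (push_S ?w f)))
      (Comp (map_tm G0 (snd (push_S ?w f))) (map_tm G0 (snd (push_S v g))))"
    by (rule S_vec_square_Comp[OF f g _ _ _ _ _ Comp.IH(2)[OF g Comp.prems(2)] Comp.IH(1)[OF f w]])
      (simp_all add: tmty_map_G0 length_push_S tmty_push_S f g w Comp.prems(2))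
  then show ?case by (simp add: Let_def)
next
  case (Tens f g)
  from Tens.prems(1) obtain a1 b1 a2 b2 where f: "tmty tyS f = Some (a1, b1)"
    and g: "tmty tyS g = Some (a2, b2)" and "a = a1 + a2" "b = b1 + b2"
    by (rule tmty_TensE)
  with Tens.prems(2) have v1: "length (take a1 v) = a1" and v2: "length (drop a1 v) = a2" by auto
  have "Comp (Tens f g) (S_vec (take a1 v @ drop a1 v)) \<approx>\<^sub>S
      Comp (S_vec (fst (push_S (take a1 v) f) @ fst (push_S (drop a1 v) g)))
        (Tens (map_tm G0 (snd (push_S (take a1 v) f))) (map_tm G0 (snd (push_S (drop a1 v) g))))"
    by (rule S_vec_square_Tens[OF f g _ _ _ _ _ _ Tens.IH(1)[OF f v1] Tens.IH(2)[OF g v2]])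
      (use v1 v2 in \<open>simp_all add: tmty_map_G0 length_push_S tmty_push_S f g\<close>)
  then show ?case by (simp add: Let_def tm_src_eq[OF f])
next
  case (Br m n)
  then have "Comp (Br m n) (S_vec (take m v @ drop m v))
      \<approx>\<^sub>S Comp (S_vec (drop m v @ take m v)) (Br m n)"
    by (intro Br_S_vec) auto
  then show ?case by simp
next
  case (BrInv m n)
  then have "Comp (BrInv m n) (S_vec (take n v @ drop n v))
      \<approx>\<^sub>S Comp (S_vec (drop n v @ take n v)) (BrInv m n)"
    by (intro BrInv_S_vec) auto
  then show ?case by simp
qed

section \<open>The functor \<open>\<iota>\<close>\<close>

lemma push_S_map_G0:
  assumes "tmty ty0 s = Some (a, b)"
  shows "fst (push_S (replicate a 0) (map_tm G0 s)) = replicate b 0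
    \<and> snd (push_S (replicate a 0) (map_tm G0 s)) \<approx>\<^sub>D s"
  using assms
proof (induction s arbitrary: a b)
  case (Gen g)
  show ?case
  proof (cases g)
    case G_Delta
    have ab: "a = 1" "b = 2" using Gen G_Delta by auto
    have "Comp (Id 2) (Gen G_Delta) \<approx>\<^sub>D Gen G_Delta" by (rule comp_Id_left) simp
    then show ?thesis using G_Delta ab by (simp add: braid_pow_def numeral_2_eq_2)
  next
    case G_OmP
    have ab: "a = 2" "b = 0" using Gen G_OmP by auto
    have "Comp (Gen G_OmP) (Id 2) \<approx>\<^sub>D Gen G_OmP" by (rule comp_Id_right) simp
    then show ?thesis using G_OmP ab by (simp add: braid_pow_def omega_pow_def numeral_2_eq_2)
  next
    case G_OmM
    have ab: "a = 2" "b = 0" using Gen G_OmM by auto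
    have "Comp (Gen G_OmM) (Id 2) \<approx>\<^sub>D Gen G_OmM" by (rule comp_Id_right) simp
    then show ?thesis using G_OmM ab by (simp add: braid_pow_def omega_pow_def numeral_2_eq_2)
  qed (use Gen in \<open>auto intro: beq.refl\<close>)
next
  case (Id n)
  then show ?case by (auto intro: beq.refl)
next
  case (Comp f g)
  from Comp.prems(1) obtain c where g: "tmty ty0 g = Some (a, c)" and f: "tmty ty0 f = Some (c, b)"
    by (rule tmty_CompE)
  show ?case using Comp.IH(2)[OF g] Comp.IH(1)[OF f] by (auto simp: Let_def intro: beq.comp_cong)
next
  case (Tens f g)
  from Tens.prems(1) obtain a1 b1 a2 b2 where f: "tmty ty0 f = Some (a1, b1)"
    and g: "tmty ty0 g = Some (a2, b2)" and ab: "a = a1 + a2" "b = b1 + b2"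
    by (rule tmty_TensE)
  have sf: "tm_src tyS (map_tm G0 f) = a1" using tm_src_eq[OF f] by (simp add: tm_src_map_G0)
  show ?case using Tens.IH(1)[OF f] Tens.IH(2)[OF g] ab sf
    by (auto simp: Let_def replicate_add intro: beq.tens_cong)
next
  case (Br m n)
  then show ?case by (auto simp: replicate_add[symmetric] add.commute intro: beq.refl)
next
  case (BrInv m n)
  then show ?case by (auto simp: replicate_add[symmetric] add.commute intro: beq.refl)
qed

lemma beq_map_G0: "s \<approx>\<^sub>D t \<Longrightarrow> map_tm G0 s \<approx>\<^sub>S map_tm G0 t"
proof (induction rule: beq.induct)
  case (rel s t)
  then have "(map_tm G0 s, map_tm G0 t) \<in> R_DS"
    unfolding R_D_def R_DS_def coalg_rels_def by (elim insertE emptyE) simp_all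
  then show ?case by (rule beq.rel)
next
  case (sym s t)
  then show ?case by (blast intro: beq.sym)
next
  case (trans s t u)
  then show ?case by (blast intro: beq.trans)
qed (auto simp: tmty_map_G0 intro: beq.refl beq.comp_cong beq.tens_cong beq.id_l beq.id_r beq.assoc
  beq.tens_assoc beq.tens_unit_l beq.tens_unit_r beq.tens_id beq.interchange beq.br_inv1 beq.br_inv2
  beq.br_nat beq.hex1 beq.hex2)

lemma map_G0_dpow: "map_tm G0 (dpow G_Delta n) = dpow (G0 G_Delta) n"
  by (induction n) auto

lemma map_G0_epow: "map_tm G0 (epow G_Eps n) = epow (G0 G_Eps) n"
  by (induction n) auto

definition tm_class :: "('g \<Rightarrow> nat \<times> nat) \<Rightarrow> ('g tm \<times> 'g tm) set \<Rightarrow> 'g tm \<Rightarrow> 'g tm set" where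
  "tm_class ty R s = {t. beq ty R s t}"

lemma Hom_iff: "X \<in> Hom ty R n m \<longleftrightarrow> (\<exists>s. tmty ty s = Some (n, m) \<and> X = tm_class ty R s)"
  unfolding Hom_def quotient_def tm_class_def by auto

lemma tm_class_eq_iff: "tm_class ty R s = tm_class ty R t \<longleftrightarrow> beq ty R s t"
proof
  assume "tm_class ty R s = tm_class ty R t"
  then show "beq ty R s t" unfolding tm_class_def by (auto intro: beq.refl)
qed (auto simp: tm_class_def intro: beq.trans beq.sym)

lemma conv_comp_tm_class:
  "conv_comp ty R d n (tm_class ty R f) (tm_class ty R g)
    = tm_class ty R (Comp (Tens f g) (dpow d n))"
  unfolding conv_comp_def tm_class_def
  by (auto intro: beq.refl beq.trans[OF beq.comp_cong[OF beq.tens_cong beq.refl]])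

lemma conv_id_tm_class: "conv_id ty R e n = tm_class ty R (epow e n)"
  unfolding conv_id_def tm_class_def by simp

lemma iota_tm_class: "iota (tm_class ty0 R_D s) = tm_class tyS R_DS (map_tm G0 s)"
  unfolding iota_def tm_class_def by (auto intro: beq.refl beq.trans beq_map_G0)

lemma beq_map_G0_imp_beq:
  assumes s: "tmty ty0 s = Some (n, 0)" and t: "tmty ty0 t = Some (n, 0)"
    and eq: "map_tm G0 s \<approx>\<^sub>S map_tm G0 t"
  shows "s \<approx>\<^sub>D t"
proof -
  let ?k = "replicate n 0"
  have "s \<approx>\<^sub>D snd (push_S ?k (map_tm G0 s))"
    using push_S_map_G0[OF s] by (simp add: beq.sym)
  also have "\<dots> \<approx>\<^sub>D snd (push_S ?k (map_tm G0 t))"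
    using push_S_respects_beq[OF eq] s by (simp add: tmty_map_G0)
  also have "\<dots> \<approx>\<^sub>D t" using push_S_map_G0[OF t] by simp
  finally show ?thesis .
qed

lemma beq_map_G0_ex:
  assumes t: "tmty tyS t = Some (n, 0)"
  shows "\<exists>s. tmty ty0 s = Some (n, 0) \<and> t \<approx>\<^sub>S map_tm G0 s"
proof -
  define p where "p = push_S (replicate n 0) t"
  have "fst p = []" and tp: "tmty ty0 (snd p) = Some (n, 0)"
    using push_S_typing[OF t, of "replicate n 0"] unfolding p_def by auto
  have "t \<approx>\<^sub>S Comp t (Id n)" by (rule beq.sym, rule comp_Id_right) (simp add: t)
  also have "\<dots> \<approx>\<^sub>S Comp t (S_vec (replicate n 0))"
    by (rule comp_cong_right, rule beq.sym, rule S_vec_zero)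
  also have "\<dots> \<approx>\<^sub>S Comp (S_vec (fst p)) (map_tm G0 (snd p))"
    unfolding p_def by (rule push_S_sound[OF t]) simp
  also have "\<dots> \<approx>\<^sub>S map_tm G0 (snd p)"
    unfolding \<open>fst p = []\<close> S_vec.simps(1) by (rule comp_Id_left) (simp add: tmty_map_G0 tp)
  finally show ?thesis using tp by blast
qed

lemma inj_on_iota: "inj_on iota (EndD n)"
proof
  fix X Y assume "X \<in> EndD n" "Y \<in> EndD n" and eq: "iota X = iota Y"
  then obtain s t where s: "tmty ty0 s = Some (n, 0)" "X = tm_class ty0 R_D s"
    and t: "tmty ty0 t = Some (n, 0)" "Y = tm_class ty0 R_D t"
    unfolding EndD_def Hom_iff by auto
  have "map_tm G0 s \<approx>\<^sub>S map_tm G0 t"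
    using eq s t by (simp add: iota_tm_class tm_class_eq_iff)
  then show "X = Y" using s t by (simp add: tm_class_eq_iff beq_map_G0_imp_beq)
qed

lemma iota_image: "iota ` EndD n = EndDS n"
proof
  show "iota ` EndD n \<subseteq> EndDS n"
    unfolding EndD_def EndDS_def by (force simp: Hom_iff iota_tm_class tmty_map_G0)
next
  show "EndDS n \<subseteq> iota ` EndD n"
  proof
    fix Y assume "Y \<in> EndDS n"
    then obtain t where t: "tmty tyS t = Some (n, 0)" "Y = tm_class tyS R_DS t"
      unfolding EndDS_def Hom_iff by auto
    obtain s where s: "tmty ty0 s = Some (n, 0)" "t \<approx>\<^sub>S map_tm G0 s"
      using beq_map_G0_ex[OF t(1)] by blast
    have "Y = iota (tm_class ty0 R_D s)" using t s by (simp add: iota_tm_class tm_class_eq_iff)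
    moreover have "tm_class ty0 R_D s \<in> EndD n" unfolding EndD_def Hom_iff using s by auto
    ultimately show "Y \<in> iota ` EndD n" by blast
  qed
qed

lemma iota_compD:
  assumes "X \<in> EndD n" and "Y \<in> EndD n"
  shows "iota (compD n X Y) = compDS n (iota X) (iota Y)"
proof -
  obtain s t where "X = tm_class ty0 R_D s" "Y = tm_class ty0 R_D t"
    using assms unfolding EndD_def Hom_iff by auto
  then show ?thesis
    by (simp add: compD_def compDS_def conv_comp_tm_class iota_tm_class map_G0_dpow)
qed

lemma iota_idD: "iota (idD n) = idDS n"
  by (simp add: idD_def idDS_def conv_id_tm_class iota_tm_class map_G0_epow)

theorem theorem1p1:
  fixes n :: nat
  shows "bij_betw iota (EndD n) (EndDS n)
       \<and> (\<forall>X\<in>EndD n. \<forall>Y\<in>EndD n. iota (compD n X Y) = compDS n (iota X) (iota Y))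
       \<and> iota (idD n) = idDS n"
  using inj_on_iota iota_image iota_compD iota_idD by (auto simp: bij_betw_def)

end
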